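(* Let $k\geq 2$ be an integer, let $c_0>0$ be a sufficiently large constant, and suppose that $c_0k^2/n\leq p\leq 1/2$. Then with probability $1-o(1)$ as $n\to\infty$, $$\mathrm{SDP}_k(G(n,p))\geq\Big(1-\frac1k\Big)\binom n2 p+c_1n^{3/2}p^{1/2}$$ for some constant $c_1>0$.
   Context: $G(n,p)$ is the random graph on $V=\{1,\dots,n\}$ with each possible edge present independently with probability $p$. For a graph $G$ with adjacency matrix $A=(a_{ij})$, the Frieze–Jerrum semidefinite relaxation of MAX $k$-CUT is $$\mathrm{SDP}_k(G)=\max\sum_{i<j}a_{ij}\frac{k-1}{k}\big(1-\langle v_i,v_j\rangle\big)$$ over all $v_1,\dots,v_n\in\mathbb R^n$ with $\|v_i\|=1$ for all $i$ and $\langle v_i,v_j\rangle\geq-\frac{1}{k-1}$ for all $i,j$. *)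

theory Defs
  imports "HOL-Probability.Probability"
begin

definition pairs :: "nat \<Rightarrow> (nat \<times> nat) set" where
  "pairs n = {(i, j). 1 \<le> i \<and> i < j \<and> j \<le> n}"

lemma finite_pairs: "finite (pairs n)"
  by (rule finite_subset[of _ "{1..n} \<times> {1..n}"]) (auto simp: pairs_def)

text \<open>A graph on {1..n} is represented by its adjacency indicator on pairs i<j
  (value False outside pairs n). G(n,p): each pair independently present with prob. p.\<close>
definition gnp :: "nat \<Rightarrow> real \<Rightarrow> (nat \<times> nat \<Rightarrow> bool) pmf" where
  "gnp n p = Pi_pmf (pairs n) False (\<lambda>_. bernoulli_pmf p)"

definition inner_n :: "nat \<Rightarrow> (nat \<Rightarrow> real) \<Rightarrow> (nat \<Rightarrow> real) \<Rightarrow> real" where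
  "inner_n n x y = (\<Sum>t\<in>{1..n}. x t * y t)"

definition fj_feasible :: "nat \<Rightarrow> nat \<Rightarrow> (nat \<Rightarrow> nat \<Rightarrow> real) \<Rightarrow> bool" where
  "fj_feasible n k v \<longleftrightarrow>
     (\<forall>i\<in>{1..n}. inner_n n (v i) (v i) = 1) \<and>
     (\<forall>i\<in>{1..n}. \<forall>j\<in>{1..n}. inner_n n (v i) (v j) \<ge> - 1 / (real k - 1))"

definition fj_objective :: "nat \<Rightarrow> nat \<Rightarrow> (nat \<times> nat \<Rightarrow> bool) \<Rightarrow> (nat \<Rightarrow> nat \<Rightarrow> real) \<Rightarrow> real" where
  "fj_objective n k G v =
     (\<Sum>(i, j)\<in>pairs n. (if G (i, j) then 1 else 0) * ((real k - 1) / real k) * (1 - inner_n n (v i) (v j)))"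

text \<open>SDP_k(G): the optimum (supremum, attained by compactness) of the relaxation.\<close>
definition SDP :: "nat \<Rightarrow> nat \<Rightarrow> (nat \<times> nat \<Rightarrow> bool) \<Rightarrow> real" where
  "SDP n k G = Sup (fj_objective n k G ` {v. fj_feasible n k v})"

end

theory Submission
  imports Defs "HOL-Real_Asymp.Real_Asymp"
begin

text \<open>
  Split the vertices into a first half L and a second half R. Every vertex of R gets its own
  basis vector; a vertex i of L gets a unit vector alpha_i e_i - phi_i sum_(t in R) (a_it - p) e_t
  with phi_i about (np)^(-1/2). An edge between i in L and t in R then has inner product
  -phi_i (1 - p), so these edges add about (np)^(-1/2) times the number of L-R edges, i.e. order
  n^(3/2) p^(1/2), to the trivial value (1 - 1/k) e(G). The edges inside L pay a penalty which
  splits into a fluctuation (small by Chebyshev) and p times a sum of inner products, bounded by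
  the squared column sums sum_i phi_i (a_it - p), whose second moments are O(1) because phi_i
  depends on the edge it only through a unit change of the degree. The constraints
  <v_i, v_j> >= -1/(k-1) hold deterministically for small p and otherwise with high probability
  by Hoeffding bounds on degrees and codegrees; Chebyshev controls the number of edges and the
  truncated degrees.
\<close>

section \<open>Independence in products of Bernoulli measures\<close>

definition depends_only_on :: "(('a \<Rightarrow> bool) \<Rightarrow> real) \<Rightarrow> 'a set \<Rightarrow> bool" where
  "depends_only_on F A \<longleftrightarrow> (\<forall>x y. (\<forall>e\<in>A. x e = y e) \<longrightarrow> F x = F y)"

lemma depends_only_on_const [simp]: "depends_only_on (\<lambda>_. c) A"
  by (simp add: depends_only_on_def)

lemma depends_only_on_coord: "e \<in> A \<Longrightarrow> depends_only_on (\<lambda>x. f (x e)) A"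
  by (simp add: depends_only_on_def)

lemma depends_only_on_mono: "depends_only_on F A \<Longrightarrow> A \<subseteq> B \<Longrightarrow> depends_only_on F B"
  by (auto simp: depends_only_on_def)

lemma depends_only_on_mult:
  "depends_only_on F A \<Longrightarrow> depends_only_on G A \<Longrightarrow> depends_only_on (\<lambda>x. F x * G x) A"
  unfolding depends_only_on_def by metis

lemma depends_only_on_comp: "depends_only_on F A \<Longrightarrow> depends_only_on (\<lambda>x. f (F x)) A"
  unfolding depends_only_on_def by metis

lemma finite_set_pmf_Pi_pmf:
  fixes d :: "'b::finite"
  assumes "finite S"
  shows "finite (set_pmf (Pi_pmf S d P))"
proof -
  have "set_pmf (Pi_pmf S d P) \<subseteq> PiE_dflt S d (\<lambda>_. UNIV)"
    using set_Pi_pmf_subset[OF assms, of d P] by (auto simp: PiE_dflt_def)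
  moreover have "finite (PiE_dflt S d (\<lambda>_. UNIV))"
    using assms by (intro finite_PiE_dflt) auto
  ultimately show ?thesis by (rule finite_subset)
qed

lemma expectation_pair_pmf_mult:
  fixes F :: "'a \<Rightarrow> real" and G :: "'b \<Rightarrow> real"
  assumes "finite (set_pmf M)" "finite (set_pmf N)"
  shows "measure_pmf.expectation (pair_pmf M N) (\<lambda>z. F (fst z) * G (snd z)) =
         measure_pmf.expectation M F * measure_pmf.expectation N G"
proof -
  have "measure_pmf.expectation (pair_pmf M N) (\<lambda>z. F (fst z) * G (snd z)) =
        (\<Sum>z\<in>set_pmf M \<times> set_pmf N. F (fst z) * G (snd z) * pmf (pair_pmf M N) z)"
    using assms by (intro integral_measure_pmf_real) auto
  also have "\<dots> = (\<Sum>(a, b)\<in>set_pmf M \<times> set_pmf N. (F a * pmf M a) * (G b * pmf N b))"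
    by (intro sum.cong) (auto simp: pmf_pair)
  also have "\<dots> = (\<Sum>a\<in>set_pmf M. \<Sum>b\<in>set_pmf N. (F a * pmf M a) * (G b * pmf N b))"
    by (simp add: sum.cartesian_product)
  also have "\<dots> = (\<Sum>a\<in>set_pmf M. F a * pmf M a) * (\<Sum>b\<in>set_pmf N. G b * pmf N b)"
    by (simp add: sum_product)
  also have "\<dots> = measure_pmf.expectation M F * measure_pmf.expectation N G"
    using assms by (simp add: integral_measure_pmf_real)
  finally show ?thesis .
qed

lemma expectation_Pi_pmf_split:
  fixes F G :: "('a \<Rightarrow> bool) \<Rightarrow> real"
  assumes S: "finite S" and A: "A \<subseteq> S" and B: "B \<subseteq> S - A"
    and F: "depends_only_on F A" and G: "depends_only_on G B"
  shows "measure_pmf.expectation (Pi_pmf S False P) (\<lambda>x. F x * G x) =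
         measure_pmf.expectation (Pi_pmf A False P) F *
         measure_pmf.expectation (Pi_pmf (S - A) False P) G"
proof -
  have fin: "finite A" "finite (S - A)" using S A finite_subset by auto
  define merge where "merge = (\<lambda>(f::'a \<Rightarrow> bool, g) x. if x \<in> A then f x else g x)"
  have split_S: "S = A \<union> (S - A)" using A by auto
  have "Pi_pmf S False P = map_pmf merge (pair_pmf (Pi_pmf A False P) (Pi_pmf (S - A) False P))"
    unfolding merge_def by (subst split_S, subst Pi_pmf_union) (use fin in auto)
  hence "measure_pmf.expectation (Pi_pmf S False P) (\<lambda>x. F x * G x) =
         measure_pmf.expectation (pair_pmf (Pi_pmf A False P) (Pi_pmf (S - A) False P))
           (\<lambda>z. F (merge z) * G (merge z))"
    by simp
  also have "\<dots> = measure_pmf.expectation (pair_pmf (Pi_pmf A False P) (Pi_pmf (S - A) False P))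
                    (\<lambda>z. F (fst z) * G (snd z))"
  proof (intro Bochner_Integration.integral_cong refl)
    fix z :: "('a \<Rightarrow> bool) \<times> ('a \<Rightarrow> bool)"
    have "F (merge z) = F (fst z)"
      using F unfolding depends_only_on_def merge_def by (cases z) auto
    moreover have "\<forall>e\<in>B. merge z e = snd z e" using B unfolding merge_def by (cases z) auto
    hence "G (merge z) = G (snd z)" using G unfolding depends_only_on_def by blast
    ultimately show "F (merge z) * G (merge z) = F (fst z) * G (snd z)" by simp
  qed
  also have "\<dots> = measure_pmf.expectation (Pi_pmf A False P) F *
                  measure_pmf.expectation (Pi_pmf (S - A) False P) G"
    using fin by (intro expectation_pair_pmf_mult finite_set_pmf_Pi_pmf)
  finally show ?thesis .
qed

lemma expectation_Pi_pmf_indep: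
  fixes F G :: "('a \<Rightarrow> bool) \<Rightarrow> real"
  assumes S: "finite S" and A: "A \<subseteq> S" and B: "B \<subseteq> S" and AB: "A \<inter> B = {}"
    and F: "depends_only_on F A" and G: "depends_only_on G B"
  shows "measure_pmf.expectation (Pi_pmf S False P) (\<lambda>x. F x * G x) =
         measure_pmf.expectation (Pi_pmf S False P) F * measure_pmf.expectation (Pi_pmf S False P) G"
proof -
  have B': "B \<subseteq> S - A" using B AB by auto
  show ?thesis
    using expectation_Pi_pmf_split[OF S A B' F G]
      expectation_Pi_pmf_split[OF S A B' F depends_only_on_const[of 1 B]]
      expectation_Pi_pmf_split[OF S A B' depends_only_on_const[of 1 A] G]
    by simp
qed

locale bernoulli_product =
  fixes S :: "'a set" and q :: real
  assumes finite_S: "finite S" and q_nonneg: "0 \<le> q" and q_le_1: "q \<le> 1"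
begin

abbreviation M :: "('a \<Rightarrow> bool) pmf" where "M \<equiv> Pi_pmf S False (\<lambda>_. bernoulli_pmf q)"
abbreviation E :: "(('a \<Rightarrow> bool) \<Rightarrow> real) \<Rightarrow> real" where "E f \<equiv> measure_pmf.expectation M f"
abbreviation Pr :: "('a \<Rightarrow> bool) set \<Rightarrow> real" where "Pr A \<equiv> measure_pmf.prob M A"

lemma integrable_M [simp, intro]: "integrable (measure_pmf M) (f :: ('a \<Rightarrow> bool) \<Rightarrow> real)"
  by (rule integrable_measure_pmf_finite[OF finite_set_pmf_Pi_pmf[OF finite_S]])

lemma E_add: "E (\<lambda>x. f x + g x) = E f + E g"
  by (rule Bochner_Integration.integral_add) auto

lemma E_diff: "E (\<lambda>x. f x - g x) = E f - E g"
  by (rule Bochner_Integration.integral_diff) auto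

lemma E_sum: "E (\<lambda>x. \<Sum>i\<in>I. f i x) = (\<Sum>i\<in>I. E (f i))"
  by (rule Bochner_Integration.integral_sum) auto

lemma E_mono: "(\<And>x. f x \<le> g x) \<Longrightarrow> E f \<le> E g"
  by (rule integral_mono) auto

lemma E_nonneg: "(\<And>x. 0 \<le> f x) \<Longrightarrow> 0 \<le> E f"
  by (rule integral_nonneg_AE) auto

lemma E_mult_indep:
  "A \<subseteq> S \<Longrightarrow> B \<subseteq> S \<Longrightarrow> A \<inter> B = {} \<Longrightarrow> depends_only_on F A \<Longrightarrow> depends_only_on G B \<Longrightarrow>
   E (\<lambda>x. F x * G x) = E F * E G"
  by (rule expectation_Pi_pmf_indep[OF finite_S])

lemma E_coord: assumes "e \<in> S" shows "E (\<lambda>x. of_bool (x e)) = q"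
proof -
  have "map_pmf (\<lambda>x. x e) M = bernoulli_pmf q"
    using assms finite_S by (simp add: Pi_pmf_component)
  hence "E (\<lambda>x. of_bool (x e)) = measure_pmf.expectation (bernoulli_pmf q) of_bool"
    by (metis integral_map_pmf)
  thus ?thesis using q_nonneg q_le_1 by simp
qed

lemma Pr_union_le: "Pr (A \<union> B) \<le> Pr A + Pr B"
  by (rule measure_Un_le) simp_all

lemma markov: "(\<And>x. 0 \<le> f x) \<Longrightarrow> 0 < c \<Longrightarrow> Pr {x. c \<le> f x} \<le> E f / c"
  using integral_Markov_inequality_measure[of "measure_pmf M" f UNIV c] by simp

lemma chebyshev: "0 < a \<Longrightarrow> Pr {x. a \<le> \<bar>f x\<bar>} \<le> E (\<lambda>x. (f x)\<^sup>2) / a\<^sup>2"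
  using measure_pmf.second_moment_method[of f M a] by simp

lemma E_square_sum_uncorrelated:
  fixes X :: "'i \<Rightarrow> ('a \<Rightarrow> bool) \<Rightarrow> real"
  assumes I: "finite I"
    and uncorr: "\<And>i j. i \<in> I \<Longrightarrow> j \<in> I \<Longrightarrow> i \<noteq> j \<Longrightarrow> E (\<lambda>x. X i x * X j x) = E (X i) * E (X j)"
  shows "E (\<lambda>x. (\<Sum>i\<in>I. X i x)\<^sup>2) =
         (\<Sum>i\<in>I. E (\<lambda>x. (X i x)\<^sup>2) - (E (X i))\<^sup>2) + (\<Sum>i\<in>I. E (X i))\<^sup>2"
proof -
  have "E (\<lambda>x. (\<Sum>i\<in>I. X i x)\<^sup>2) = (\<Sum>i\<in>I. \<Sum>j\<in>I. E (\<lambda>x. X i x * X j x))"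
    by (simp add: power2_eq_square sum_product E_sum)
  also have "\<dots> = (\<Sum>i\<in>I. \<Sum>j\<in>I. E (X i) * E (X j) +
                     (if i = j then E (\<lambda>x. (X i x)\<^sup>2) - (E (X i))\<^sup>2 else 0))"
    using uncorr by (intro sum.cong refl) (auto simp: power2_eq_square)
  also have "\<dots> = (\<Sum>i\<in>I. \<Sum>j\<in>I. E (X i) * E (X j)) + (\<Sum>i\<in>I. E (\<lambda>x. (X i x)\<^sup>2) - (E (X i))\<^sup>2)"
    using I by (simp only: sum.distrib sum.delta if_True refl) simp
  finally show ?thesis by (simp add: power2_eq_square sum_product)
qed

lemma variance_sum_uncorrelated:
  fixes X :: "'i \<Rightarrow> ('a \<Rightarrow> bool) \<Rightarrow> real"
  assumes I: "finite I"
    and uncorr: "\<And>i j. i \<in> I \<Longrightarrow> j \<in> I \<Longrightarrow> i \<noteq> j \<Longrightarrow> E (\<lambda>x. X i x * X j x) = E (X i) * E (X j)"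
  shows "E (\<lambda>x. ((\<Sum>i\<in>I. X i x) - (\<Sum>i\<in>I. E (X i)))\<^sup>2) = (\<Sum>i\<in>I. E (\<lambda>x. (X i x)\<^sup>2) - (E (X i))\<^sup>2)"
proof -
  define c where "c = (\<Sum>i\<in>I. E (X i))"
  have "E (\<lambda>x. ((\<Sum>i\<in>I. X i x) - c)\<^sup>2) = E (\<lambda>x. (\<Sum>i\<in>I. X i x)\<^sup>2) - 2 * c * E (\<lambda>x. \<Sum>i\<in>I. X i x) + c\<^sup>2"
    by (simp add: power2_diff E_add E_diff)
  also have "E (\<lambda>x. \<Sum>i\<in>I. X i x) = c" by (simp add: E_sum c_def)
  finally show ?thesis
    using E_square_sum_uncorrelated[OF I uncorr] by (simp add: c_def power2_eq_square)
qed

lemma hoeffding_blocks: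
  fixes K :: "'t \<Rightarrow> 'a set" and g :: "'t \<Rightarrow> ('a \<Rightarrow> bool) \<Rightarrow> real"
  assumes T: "finite T" "T \<noteq> {}" and K: "\<And>t. t \<in> T \<Longrightarrow> K t \<subseteq> S"
    and disj: "disjoint_family_on K T"
    and meas: "\<And>t. t \<in> T \<Longrightarrow> g t \<in> borel_measurable (PiM (K t) (\<lambda>_. count_space UNIV))"
    and bnd: "\<And>t x. t \<in> T \<Longrightarrow> 0 \<le> g t x \<and> g t x \<le> 1"
    and tau: "0 \<le> \<tau>"
  shows "Pr {x. (\<Sum>t\<in>T. g t (restrict x (K t))) \<le> (\<Sum>t\<in>T. E (\<lambda>x. g t (restrict x (K t)))) - \<tau>}
           \<le> exp (-2 * \<tau>\<^sup>2 / card T)"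
    and "Pr {x. (\<Sum>t\<in>T. g t (restrict x (K t))) \<ge> (\<Sum>t\<in>T. E (\<lambda>x. g t (restrict x (K t)))) + \<tau>}
           \<le> exp (-2 * \<tau>\<^sup>2 / card T)"
proof -
  have "prob_space.indep_vars (measure_pmf M) (\<lambda>_. count_space UNIV) (\<lambda>x f. f x) S"
    by (rule indep_vars_Pi_pmf[OF finite_S])
  hence "prob_space.indep_vars (measure_pmf M) (\<lambda>t. PiM (K t) (\<lambda>_. count_space UNIV))
           (\<lambda>t \<omega>. restrict (\<lambda>i. \<omega> i) (K t)) T"
    by (rule prob_space.indep_vars_restrict[OF measure_pmf.prob_space_axioms _ K disj])
  hence indep: "prob_space.indep_vars (measure_pmf M) (\<lambda>_. borel)
                  (\<lambda>t \<omega>. g t (restrict (\<lambda>i. \<omega> i) (K t))) T"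
    by (rule prob_space.indep_vars_compose2[OF measure_pmf.prob_space_axioms _ meas])
  interpret H: Hoeffding_ineq "measure_pmf M" T "\<lambda>t x. g t (restrict x (K t))" "\<lambda>_. 0" "\<lambda>_. 1"
     "\<Sum>t\<in>T. E (\<lambda>x. g t (restrict x (K t)))"
  proof unfold_locales
    show "prob_space.indep_vars (measure_pmf M) (\<lambda>_. borel) (\<lambda>t x. g t (restrict x (K t))) T"
      using indep by simp
    fix t assume "t \<in> T"
    thus "AE x in measure_pmf M. g t (restrict x (K t)) \<in> {0..1}" using bnd by auto
  qed (use T in simp_all)
  have pos: "(\<Sum>t\<in>T. ((\<lambda>_. 1::real) t - (\<lambda>_. 0) t)\<^sup>2) > 0" using T by (simp add: card_gt_0_iff)
  show "Pr {x. (\<Sum>t\<in>T. g t (restrict x (K t))) \<le> (\<Sum>t\<in>T. E (\<lambda>x. g t (restrict x (K t)))) - \<tau>}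
           \<le> exp (-2 * \<tau>\<^sup>2 / card T)"
    using H.Hoeffding_ineq_le[OF tau pos] by simp
  show "Pr {x. (\<Sum>t\<in>T. g t (restrict x (K t))) \<ge> (\<Sum>t\<in>T. E (\<lambda>x. g t (restrict x (K t)))) + \<tau>}
           \<le> exp (-2 * \<tau>\<^sup>2 / card T)"
    using H.Hoeffding_ineq_ge[OF tau pos] by simp
qed

end

lemma frac_sqrt_mono:
  fixes x y a b :: real
  assumes "0 \<le> x" "x \<le> y" "0 < a" "0 \<le> b"
  shows "x / sqrt (a + b * x) \<le> y / sqrt (a + b * y)"
proof -
  have pos: "0 < a + b * x" "0 < a + b * y" using assms by (auto intro: add_pos_nonneg)
  have "x\<^sup>2 * a \<le> y\<^sup>2 * a" using assms by (intro mult_right_mono power_mono) auto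
  moreover have "x * (b * x * y) \<le> y * (b * x * y)" using assms by (intro mult_right_mono) auto
  ultimately have "x\<^sup>2 * (a + b * y) \<le> y\<^sup>2 * (a + b * x)"
    by (simp add: algebra_simps power2_eq_square)
  hence "(x / sqrt (a + b * x))\<^sup>2 \<le> (y / sqrt (a + b * y))\<^sup>2"
    using pos by (simp add: power_divide divide_simps)
  moreover have "0 \<le> y / sqrt (a + b * y)" using assms pos by simp
  ultimately show ?thesis by (rule power2_le_imp_le)
qed

lemma inv_sqrt_one_plus_diff:
  fixes a b :: real
  assumes a: "0 \<le> a" and ab: "a \<le> b"
  shows "0 \<le> 1 / sqrt (1 + a) - 1 / sqrt (1 + b)"
    and "1 / sqrt (1 + a) - 1 / sqrt (1 + b) \<le> (b - a) / 2"
proof -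
  define A B where "A = sqrt (1 + a)" and "B = sqrt (1 + b)"
  have A1: "1 \<le> A" and B1: "1 \<le> B" and AB: "A \<le> B" using a ab by (auto simp: A_def B_def)
  show "0 \<le> 1 / sqrt (1 + a) - 1 / sqrt (1 + b)"
    using A1 AB unfolding A_def[symmetric] B_def[symmetric] by (simp add: frac_le)
  have "1 / A - 1 / B = (B - A) / (A * B)" using A1 B1 by (simp add: field_simps)
  also have "\<dots> \<le> (B - A) / 1"
    using AB mult_mono[OF A1 B1] A1 by (intro divide_left_mono) auto
  also have "B - A = (b - a) / (B + A)"
  proof -
    have "(B - A) * (B + A) = b - a"
      using a ab by (simp add: A_def B_def algebra_simps flip: power2_eq_square)
    thus ?thesis using A1 B1 by (simp add: eq_divide_eq)
  qed
  also have "\<dots> \<le> (b - a) / 2" using A1 B1 ab by (intro divide_left_mono) auto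
  finally show "1 / sqrt (1 + a) - 1 / sqrt (1 + b) \<le> (b - a) / 2" by (simp add: A_def B_def)
qed

lemma sum_less_pairs_eq:
  fixes u :: "nat \<Rightarrow> real"
  assumes fin: "finite I"
  shows "2 * (\<Sum>i\<in>I. \<Sum>j\<in>{j\<in>I. i < j}. u i * u j) = (\<Sum>i\<in>I. u i)\<^sup>2 - (\<Sum>i\<in>I. (u i)\<^sup>2)"
proof -
  have split: "(\<Sum>j\<in>I. u i * u j) =
      (\<Sum>j\<in>{j\<in>I. i < j}. u i * u j) + (\<Sum>j\<in>{j\<in>I. j < i}. u i * u j) + (u i)\<^sup>2"
    if i: "i \<in> I" for i
  proof -
    have "(\<Sum>j\<in>I. u i * u j) = u i * u i + (\<Sum>j\<in>I - {i}. u i * u j)"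
      using fin i by (simp add: sum.remove)
    also have "I - {i} = {j\<in>I. i < j} \<union> {j\<in>I. j < i}" by auto
    also have "(\<Sum>j\<in>\<dots>. u i * u j) = (\<Sum>j\<in>{j\<in>I. i < j}. u i * u j) + (\<Sum>j\<in>{j\<in>I. j < i}. u i * u j)"
      using fin by (intro sum.union_disjoint) auto
    finally show ?thesis by (simp add: power2_eq_square)
  qed
  have swap: "(\<Sum>i\<in>I. \<Sum>j\<in>{j\<in>I. j < i}. u i * u j) = (\<Sum>i\<in>I. \<Sum>j\<in>{j\<in>I. i < j}. u i * u j)"
    using sum.swap_restrict[OF fin fin, of "\<lambda>i j. u i * u j" "\<lambda>i j. j < i"] by (simp add: mult.commute)
  have "(\<Sum>i\<in>I. u i)\<^sup>2 = (\<Sum>i\<in>I. \<Sum>j\<in>I. u i * u j)" by (simp add: power2_eq_square sum_product)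
  also have "\<dots> = (\<Sum>i\<in>I. \<Sum>j\<in>{j\<in>I. i < j}. u i * u j) + (\<Sum>i\<in>I. \<Sum>j\<in>{j\<in>I. j < i}. u i * u j)
                  + (\<Sum>i\<in>I. (u i)\<^sup>2)"
    by (simp add: split sum.distrib)
  finally show ?thesis using swap by simp
qed

lemma of_bool_mult_self [simp]: "(of_bool b :: 'a::semiring_1) * of_bool b = of_bool b"
  by simp

lemma card_pairs: "card (pairs n) = n choose 2"
proof (induction n)
  case 0
  have "pairs 0 = {}" by (auto simp: pairs_def)
  thus ?case by simp
next
  case (Suc n)
  have eq: "pairs (Suc n) = pairs n \<union> (\<lambda>i. (i, Suc n)) ` {1..n}"
    by (auto simp: pairs_def)
  have "card (pairs (Suc n)) = card (pairs n) + card ((\<lambda>i. (i, Suc n)) ` {1..n})"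
    unfolding eq by (rule card_Un_disjoint) (simp add: finite_pairs, simp, auto simp: pairs_def)
  also have "card ((\<lambda>i. (i, Suc n)) ` {1..n}) = n" by (subst card_image) (auto simp: inj_on_def)
  finally show ?case using Suc.IH by (simp add: numeral_2_eq_2)
qed

lemma card_pairs_le: "real (card (pairs n)) \<le> real n ^ 2"
proof -
  have "card (pairs n) \<le> card ({1..n} \<times> {1..n})"
    by (intro card_mono) (auto simp: pairs_def)
  thus ?thesis by (simp add: card_cartesian_product power2_eq_square flip: of_nat_mult)
qed

lemma inner_n_sym: "inner_n n x y = inner_n n y x"
  by (simp add: inner_n_def mult.commute)

lemma inner_n_unit_ge: "inner_n n x x = 1 \<Longrightarrow> inner_n n y y = 1 \<Longrightarrow> -1 \<le> inner_n n x y"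
proof -
  have "0 \<le> (\<Sum>t\<in>{1..n}. (x t + y t)\<^sup>2)" by (simp add: sum_nonneg)
  also have "\<dots> = inner_n n x x + 2 * inner_n n x y + inner_n n y y"
    by (simp add: inner_n_def power2_eq_square algebra_simps sum.distrib sum_distrib_left)
  finally show "inner_n n x x = 1 \<Longrightarrow> inner_n n y y = 1 \<Longrightarrow> -1 \<le> inner_n n x y" by simp
qed

lemma fj_objective_eq:
  "fj_objective n k G v =
     (real k - 1) / real k * (\<Sum>e\<in>pairs n. of_bool (G e) * (1 - inner_n n (v (fst e)) (v (snd e))))"
  by (simp add: fj_objective_def sum_distrib_left case_prod_beta of_bool_def mult_ac)

lemma fj_objective_le_SDP:
  assumes k: "2 \<le> k" and feas: "fj_feasible n k v"
  shows "fj_objective n k G v \<le> SDP n k G"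
proof -
  define c where "c = (real k - 1) / real k"
  have c0: "0 \<le> c" using k by (simp add: c_def)
  have "fj_objective n k G w \<le> (\<Sum>e\<in>pairs n. 2 * c)" if w: "fj_feasible n k w" for w
    unfolding fj_objective_def c_def[symmetric]
  proof (rule sum_mono, clarify)
    fix i j assume "(i, j) \<in> pairs n"
    hence "-1 \<le> inner_n n (w i) (w j)"
      using w by (intro inner_n_unit_ge) (auto simp: fj_feasible_def pairs_def)
    hence "c * (1 - inner_n n (w i) (w j)) \<le> c * 2" using c0 by (intro mult_left_mono) auto
    thus "(if G (i, j) then 1 else 0) * c * (1 - inner_n n (w i) (w j)) \<le> 2 * c"
      using c0 by (simp add: mult.commute)
  qed
  hence "bdd_above (fj_objective n k G ` {v. fj_feasible n k v})"
    by (intro bdd_aboveI[of _ "\<Sum>e\<in>pairs n. 2 * c"]) auto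
  thus ?thesis unfolding SDP_def using feas by (intro cSup_upper) auto
qed

section \<open>The two halves of the vertex set\<close>

locale gnp_halves =
  fixes n :: nat and q :: real
  assumes q_pos: "0 < q" and q_le_half: "q \<le> 1 / 2" and n_ge_2: "2 \<le> n"
begin

sublocale bernoulli_product "pairs n" q
  using q_pos q_le_half by unfold_locales (auto simp: finite_pairs)

definition h :: nat where "h = n div 2"
definition r :: nat where "r = n - h"
definition L :: "nat set" where "L = {1..h}"
definition R :: "nat set" where "R = {h + 1..n}"
definition edges_to_R :: "nat \<Rightarrow> (nat \<times> nat) set" where "edges_to_R i = Pair i ` R"
definition pairs_L :: "(nat \<times> nat) set" where "pairs_L = {(i, j). i \<in> L \<and> j \<in> L \<and> i < j}"
definition pairs_R :: "(nat \<times> nat) set" where "pairs_R = {(i, j). i \<in> R \<and> j \<in> R \<and> i < j}"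

lemma h_ge_1: "1 \<le> h" and h_le_n: "h \<le> n"
  using n_ge_2 by (auto simp: h_def)

lemma n_le_3h: "real n \<le> 3 * real h"
proof -
  have "n \<le> 2 * h + 1" by (simp add: h_def)
  thus ?thesis using h_ge_1 by linarith
qed

lemma r_ge_1: "1 \<le> r" and r_le_n: "r \<le> n" and half_n_le_r: "real n / 2 \<le> real r"
  using n_ge_2 by (auto simp: r_def h_def)

lemma n_sq_le_8_h_r: "real n ^ 2 / 8 \<le> real h * real r"
proof -
  have "real n / 4 \<le> real h" using n_le_3h h_ge_1 by (simp add: h_def)
  hence "(real n / 4) * (real n / 2) \<le> real h * real r"
    using half_n_le_r by (intro mult_mono) auto
  thus ?thesis by (simp add: power2_eq_square)
qed

lemma finite_L [simp]: "finite L" and finite_R [simp]: "finite R"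
  and card_L [simp]: "card L = h" and card_R [simp]: "card R = r"
  by (simp_all add: L_def R_def r_def)

lemma R_nonempty: "R \<noteq> {}"
  using r_ge_1 card_R by (metis card.empty not_one_le_zero)

lemma L_R_disjoint: "L \<inter> R = {}"
  by (auto simp: L_def R_def)

lemma L_union_R: "{1..n} = L \<union> R"
  using h_le_n by (auto simp: L_def R_def)

lemma L_R_in_pairs: "i \<in> L \<Longrightarrow> t \<in> R \<Longrightarrow> (i, t) \<in> pairs n"
  by (auto simp: L_def R_def pairs_def)

lemma edges_to_R_subset: "i \<in> L \<Longrightarrow> edges_to_R i \<subseteq> L \<times> R"
  by (auto simp: edges_to_R_def)

lemma edges_to_R_in_pairs: "i \<in> L \<Longrightarrow> edges_to_R i \<subseteq> pairs n"
  by (auto simp: edges_to_R_def L_R_in_pairs)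

lemma edges_to_R_disjoint: "i \<noteq> j \<Longrightarrow> edges_to_R i \<inter> edges_to_R j = {}"
  by (auto simp: edges_to_R_def)

lemma L_times_R_in_pairs: "L \<times> R \<subseteq> pairs n"
  by (auto simp: L_R_in_pairs)

lemma pairs_L_in_pairs: "pairs_L \<subseteq> pairs n"
  by (auto simp: pairs_L_def L_def pairs_def h_def)

lemma finite_pairs_L [simp]: "finite pairs_L"
  using pairs_L_in_pairs finite_pairs finite_subset by blast

lemma pairs_L_disjoint_L_times_R: "pairs_L \<inter> L \<times> R = {}"
  using L_R_disjoint by (auto simp: pairs_L_def)

lemma mem_pairs_L: "e \<in> pairs_L \<Longrightarrow> fst e \<in> L \<and> snd e \<in> L \<and> fst e \<noteq> snd e"
  by (auto simp: pairs_L_def)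

lemma sum_pairs_L: "(\<Sum>e\<in>pairs_L. f e) = (\<Sum>i\<in>L. \<Sum>j\<in>{j\<in>L. i < j}. f (i, j))"
proof -
  have "pairs_L = Sigma L (\<lambda>i. {j\<in>L. i < j})" by (auto simp: pairs_L_def)
  thus ?thesis by (simp add: sum.Sigma)
qed

lemma card_pairs_L_le: "real (card pairs_L) \<le> real n ^ 2"
proof -
  have "card pairs_L \<le> card (L \<times> L)" by (intro card_mono) (auto simp: pairs_L_def)
  also have "\<dots> \<le> n * n" using h_le_n by (simp add: card_cartesian_product mult_mono)
  finally show ?thesis by (simp add: power2_eq_square flip: of_nat_mult)
qed

lemma sum_pairs_split:
  "(\<Sum>e\<in>pairs n. f e) = (\<Sum>e\<in>pairs_L. f e) + (\<Sum>e\<in>L \<times> R. f e) + (\<Sum>e\<in>pairs_R. f e)"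
proof -
  have split: "pairs n = pairs_L \<union> L \<times> R \<union> pairs_R"
    using h_le_n by (auto simp: pairs_def pairs_L_def pairs_R_def L_def R_def)
  have "finite pairs_R" using split finite_pairs by (metis finite_Un)
  moreover have "(pairs_L \<union> L \<times> R) \<inter> pairs_R = {}"
    using L_R_disjoint by (auto simp: pairs_L_def pairs_R_def)
  ultimately show ?thesis
    unfolding split using pairs_L_disjoint_L_times_R by (simp add: sum.union_disjoint)
qed

text \<open>Degrees and edge counts are kept as sums of indicators, not rewritten to cardinalities.\<close>

declare sum_of_bool_eq [simp del] sum_mult_of_bool_eq [simp del] sum_of_bool_mult_eq [simp del]

definition deg_R :: "(nat \<times> nat \<Rightarrow> bool) \<Rightarrow> nat \<Rightarrow> real" where
  "deg_R G i = (\<Sum>t\<in>R. of_bool (G (i, t)))"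

definition codeg_R :: "(nat \<times> nat \<Rightarrow> bool) \<Rightarrow> nat \<Rightarrow> nat \<Rightarrow> real" where
  "codeg_R G i j = (\<Sum>t\<in>R. of_bool (G (i, t) \<and> G (j, t)))"

definition edge_count :: "(nat \<times> nat \<Rightarrow> bool) \<Rightarrow> real" where
  "edge_count G = (\<Sum>e\<in>pairs n. of_bool (G e))"

definition dev :: "(nat \<times> nat \<Rightarrow> bool) \<Rightarrow> nat \<Rightarrow> nat \<Rightarrow> real" where
  "dev G i t = of_bool (G (i, t)) - q"

definition dev_norm2 :: "(nat \<times> nat \<Rightarrow> bool) \<Rightarrow> nat \<Rightarrow> real" where
  "dev_norm2 G i = (\<Sum>t\<in>R. (dev G i t)\<^sup>2)"

definition dev_inner :: "(nat \<times> nat \<Rightarrow> bool) \<Rightarrow> nat \<Rightarrow> nat \<Rightarrow> real" where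
  "dev_inner G i j = (\<Sum>t\<in>R. dev G i t * dev G j t)"

lemma deg_R_nonneg: "0 \<le> deg_R G i"
  by (simp add: deg_R_def sum_nonneg)

lemma deg_R_le_r: "deg_R G i \<le> r"
  using sum_mono[of R "\<lambda>t. of_bool (G (i, t))" "\<lambda>_. 1::real"] by (simp add: deg_R_def)

lemma abs_dev_le_1: "\<bar>dev G i t\<bar> \<le> 1"
  using q_pos q_le_half by (simp add: dev_def)

lemma dev_sq: "(dev G i t)\<^sup>2 = of_bool (G (i, t)) * (1 - 2 * q) + q\<^sup>2"
  by (simp add: dev_def power2_eq_square algebra_simps)

lemma dev_norm2_eq: "dev_norm2 G i = deg_R G i * (1 - 2 * q) + real r * q\<^sup>2"
  by (simp add: dev_norm2_def dev_sq deg_R_def sum.distrib sum_distrib_right)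

lemma dev_norm2_nonneg: "0 \<le> dev_norm2 G i"
  by (simp add: dev_norm2_def sum_nonneg)

lemma dev_inner_eq: "dev_inner G i j = codeg_R G i j - q * (deg_R G i + deg_R G j) + real r * q\<^sup>2"
proof -
  have "dev_inner G i j =
        (\<Sum>t\<in>R. of_bool (G (i, t) \<and> G (j, t)) - q * (of_bool (G (i, t)) + of_bool (G (j, t))) + q\<^sup>2)"
    unfolding dev_inner_def by (intro sum.cong refl) (simp add: dev_def power2_eq_square algebra_simps)
  thus ?thesis
    by (simp add: sum.distrib sum_subtractf codeg_R_def deg_R_def sum_distrib_left distrib_left)
qed

lemma dev_inner_ge: "- q * (deg_R G i + deg_R G j) \<le> dev_inner G i j"
proof -
  have "- q * (\<Sum>t\<in>R. of_bool (G (i, t)) + of_bool (G (j, t))) \<le> dev_inner G i j"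
    unfolding dev_inner_def sum_distrib_left
  proof (rule sum_mono)
    fix t
    show "- q * (of_bool (G (i, t)) + of_bool (G (j, t))) \<le> dev G i t * dev G j t"
      using q_pos q_le_half
      by (cases "G (i, t)"; cases "G (j, t)") (auto simp: dev_def power2_eq_square algebra_simps)
  qed
  thus ?thesis by (simp add: deg_R_def sum.distrib sum_distrib_left)
qed

lemma depends_only_on_dev: "(i, t) \<in> A \<Longrightarrow> depends_only_on (\<lambda>G. dev G i t) A"
  by (simp add: depends_only_on_def dev_def)

lemma depends_only_on_deg_R: "depends_only_on (\<lambda>G. deg_R G i) (edges_to_R i)"
  by (auto simp: depends_only_on_def deg_R_def edges_to_R_def intro!: sum.cong)

lemma E_edge: "e \<in> pairs n \<Longrightarrow> E (\<lambda>G. of_bool (G e)) = q"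
  by (rule E_coord)

lemma E_dev: "i \<in> L \<Longrightarrow> t \<in> R \<Longrightarrow> E (\<lambda>G. dev G i t) = 0"
  by (simp add: dev_def E_diff E_edge L_R_in_pairs)

lemma E_dev_sq:
  assumes "i \<in> L" "t \<in> R"
  shows "E (\<lambda>G. (dev G i t)\<^sup>2) = q * (1 - q)"
proof -
  have "E (\<lambda>G. (dev G i t)\<^sup>2) = E (\<lambda>G. of_bool (G (i, t)) * (1 - 2 * q) + q\<^sup>2)"
    by (simp only: dev_sq)
  also have "\<dots> = q * (1 - 2 * q) + q\<^sup>2"
    using assms by (simp add: E_add E_edge L_R_in_pairs)
  finally show ?thesis by (simp add: power2_eq_square algebra_simps)
qed

lemma E_deg_R: "i \<in> L \<Longrightarrow> E (\<lambda>G. deg_R G i) = r * q"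
  by (simp add: deg_R_def E_sum E_edge L_R_in_pairs)

lemma variance_deg_R:
  assumes i: "i \<in> L"
  shows "E (\<lambda>G. (deg_R G i - r * q)\<^sup>2) = r * q * (1 - q)"
proof -
  have "E (\<lambda>G. ((\<Sum>t\<in>R. of_bool (G (i, t))) - (\<Sum>t\<in>R. E (\<lambda>G. of_bool (G (i, t)))))\<^sup>2) =
        (\<Sum>t\<in>R. E (\<lambda>G. (of_bool (G (i, t)))\<^sup>2) - (E (\<lambda>G. of_bool (G (i, t))))\<^sup>2)"
    using i by (intro variance_sum_uncorrelated E_mult_indep[of "{(i, _)}" "{(i, _)}"]
                      depends_only_on_coord) (auto simp: L_R_in_pairs)
  thus ?thesis using i by (simp add: deg_R_def E_edge L_R_in_pairs power2_eq_square algebra_simps)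
qed

lemma variance_edge_count:
  "E (\<lambda>G. (edge_count G - card (pairs n) * q)\<^sup>2) = card (pairs n) * q * (1 - q)"
proof -
  have "E (\<lambda>G. ((\<Sum>e\<in>pairs n. of_bool (G e)) - (\<Sum>e\<in>pairs n. E (\<lambda>G. of_bool (G e))))\<^sup>2) =
        (\<Sum>e\<in>pairs n. E (\<lambda>G. (of_bool (G e))\<^sup>2) - (E (\<lambda>G. of_bool (G e)))\<^sup>2)"
    by (intro variance_sum_uncorrelated E_mult_indep[of "{_}" "{_}"] depends_only_on_coord)
       (auto simp: finite_pairs)
  thus ?thesis by (simp add: edge_count_def E_edge power2_eq_square algebra_simps)
qed

end

section \<open>The vector system\<close>

context gnp_halves
begin

definition eps :: real where "eps = 1 / sqrt (real n * q)"

definition phi :: "(nat \<times> nat \<Rightarrow> bool) \<Rightarrow> nat \<Rightarrow> real" where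
  "phi G i = eps / sqrt (1 + eps\<^sup>2 * dev_norm2 G i)"

definition alpha :: "(nat \<times> nat \<Rightarrow> bool) \<Rightarrow> nat \<Rightarrow> real" where
  "alpha G i = 1 / sqrt (1 + eps\<^sup>2 * dev_norm2 G i)"

definition vecs :: "(nat \<times> nat \<Rightarrow> bool) \<Rightarrow> nat \<Rightarrow> nat \<Rightarrow> real" where
  "vecs G i t =
     (if i \<in> L then (if t = i then alpha G i else if t \<in> R then - (phi G i * dev G i t) else 0)
      else (if t = i then 1 else 0))"

definition inner_L :: "(nat \<times> nat \<Rightarrow> bool) \<Rightarrow> nat \<Rightarrow> nat \<Rightarrow> real" where
  "inner_L G i j = phi G i * phi G j * dev_inner G i j"

definition penalty :: "(nat \<times> nat \<Rightarrow> bool) \<Rightarrow> real" where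
  "penalty G = (\<Sum>e\<in>pairs_L. of_bool (G e) * inner_L G (fst e) (snd e))"

lemma nq_pos: "0 < real n * q"
  using n_ge_2 q_pos by simp

lemma eps_pos: "0 < eps"
  using nq_pos by (simp add: eps_def)

lemma eps_sq: "eps\<^sup>2 = 1 / (real n * q)"
  using nq_pos by (simp add: eps_def power_divide)

lemma eps_mult_nq: "eps * (real n * q) = sqrt (real n * q)"
  using nq_pos by (simp add: eps_def real_div_sqrt)

lemma phi_nonneg: "0 \<le> phi G i"
  using eps_pos dev_norm2_nonneg[of G i] by (simp add: phi_def)

lemma phi_le_eps: "phi G i \<le> eps"
proof -
  have "1 \<le> sqrt (1 + eps\<^sup>2 * dev_norm2 G i)" using dev_norm2_nonneg[of G i] by simp
  thus ?thesis using eps_pos unfolding phi_def by (simp add: divide_le_eq)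
qed

lemma phi_dev_le_eps: "phi G i * dev G i t \<le> eps"
proof -
  have "dev G i t \<le> 1" using abs_dev_le_1[of G i t] by (simp add: abs_le_iff)
  hence "phi G i * dev G i t \<le> phi G i" using phi_nonneg[of G i] by (simp add: mult_left_le)
  thus ?thesis using phi_le_eps[of G i] by simp
qed

lemma depends_only_on_phi: "depends_only_on (\<lambda>G. phi G i) (edges_to_R i)"
proof -
  have "depends_only_on (\<lambda>G. dev_norm2 G i) (edges_to_R i)"
    by (auto simp: depends_only_on_def dev_norm2_def dev_def edges_to_R_def intro!: sum.cong)
  thus ?thesis unfolding phi_def by (rule depends_only_on_comp)
qed

lemma alpha_sq_add_phi_sq: "(alpha G i)\<^sup>2 + (phi G i)\<^sup>2 * dev_norm2 G i = 1"
proof -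
  have pos: "0 < 1 + eps\<^sup>2 * dev_norm2 G i" using dev_norm2_nonneg[of G i] by (simp add: add_pos_nonneg)
  thus ?thesis by (simp add: alpha_def phi_def power_divide field_simps)
qed

lemma inner_n_split: "inner_n n x y = (\<Sum>t\<in>L. x t * y t) + (\<Sum>t\<in>R. x t * y t)"
  unfolding inner_n_def L_union_R using L_R_disjoint by (simp add: sum.union_disjoint)

lemma vecs_L:
  "i \<in> L \<Longrightarrow> t \<in> L \<Longrightarrow> vecs G i t = (if t = i then alpha G i else 0)"
  "i \<in> L \<Longrightarrow> t \<in> R \<Longrightarrow> vecs G i t = - (phi G i * dev G i t)"
  using L_R_disjoint by (auto simp: vecs_def)

lemma vecs_R:
  "j \<in> R \<Longrightarrow> t \<in> L \<Longrightarrow> vecs G j t = 0"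
  "j \<in> R \<Longrightarrow> t \<in> R \<Longrightarrow> vecs G j t = (if t = j then 1 else 0)"
  using L_R_disjoint by (auto simp: vecs_def)

lemma inner_vecs_L_L:
  assumes i: "i \<in> L" and j: "j \<in> L"
  shows "inner_n n (vecs G i) (vecs G j) = (if i = j then 1 else inner_L G i j)"
proof -
  have "(\<Sum>t\<in>L. vecs G i t * vecs G j t) =
        (\<Sum>t\<in>L. if t = i then alpha G i * (if i = j then alpha G j else 0) else 0)"
    using i j by (intro sum.cong refl) (auto simp: vecs_L)
  hence "(\<Sum>t\<in>L. vecs G i t * vecs G j t) = (if i = j then (alpha G i)\<^sup>2 else 0)"
    using i by (simp add: power2_eq_square)
  moreover have "(\<Sum>t\<in>R. vecs G i t * vecs G j t) = inner_L G i j"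
    using i j by (simp add: vecs_L inner_L_def dev_inner_def sum_distrib_left mult_ac)
  ultimately show ?thesis
    using alpha_sq_add_phi_sq[of G i]
    by (cases "i = j") (simp_all add: inner_n_split inner_L_def dev_inner_def dev_norm2_def power2_eq_square)
qed

lemma inner_vecs_L_R:
  assumes i: "i \<in> L" and j: "j \<in> R"
  shows "inner_n n (vecs G i) (vecs G j) = - (phi G i * dev G i j)"
proof -
  have "(\<Sum>t\<in>R. vecs G i t * vecs G j t) = (\<Sum>t\<in>R. if t = j then - (phi G i * dev G i t) else 0)"
    using i j by (intro sum.cong refl) (auto simp: vecs_L vecs_R)
  thus ?thesis using j by (simp add: inner_n_split vecs_R)
qed

lemma inner_vecs_R_R:
  assumes i: "i \<in> R" and j: "j \<in> R"
  shows "inner_n n (vecs G i) (vecs G j) = (if i = j then 1 else 0)"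
proof -
  have "(\<Sum>t\<in>R. vecs G i t * vecs G j t) = (\<Sum>t\<in>R. if t = i then (if i = j then 1 else 0) else 0)"
    using i j by (intro sum.cong refl) (auto simp: vecs_R)
  thus ?thesis using i by (simp add: inner_n_split vecs_R)
qed

lemma vecs_feasible:
  assumes k: "2 \<le> k" and eps_le: "eps \<le> 1 / (real k - 1)"
    and inner_L_ge: "\<And>i j. i \<in> L \<Longrightarrow> j \<in> L \<Longrightarrow> i \<noteq> j \<Longrightarrow> - 1 / (real k - 1) \<le> inner_L G i j"
  shows "fj_feasible n k (vecs G)"
proof -
  have nonpos: "- 1 / (real k - 1) \<le> 0" using k by simp
  have L_R: "- 1 / (real k - 1) \<le> inner_n n (vecs G i) (vecs G j)" if "i \<in> L" "j \<in> R" for i j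
    using that phi_dev_le_eps[of G i j] eps_le by (simp add: inner_vecs_L_R)
  have "- 1 / (real k - 1) \<le> inner_n n (vecs G i) (vecs G j)"
    if i: "i \<in> {1..n}" and j: "j \<in> {1..n}" for i j
  proof -
    consider "i \<in> L" "j \<in> L" | "i \<in> L" "j \<in> R" | "i \<in> R" "j \<in> L" | "i \<in> R" "j \<in> R"
      using i j unfolding L_union_R by blast
    thus ?thesis
    proof cases
      case 1
      hence "inner_n n (vecs G i) (vecs G j) = (if i = j then 1 else inner_L G i j)"
        by (intro inner_vecs_L_L)
      thus ?thesis using inner_L_ge[OF 1] nonpos by (smt (verit))
    next
      case 2
      thus ?thesis by (rule L_R)
    next
      case 3
      thus ?thesis using L_R[of j i] by (simp add: inner_n_sym)
    next
      case 4
      hence "inner_n n (vecs G i) (vecs G j) = (if i = j then 1 else 0)"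
        by (intro inner_vecs_R_R)
      thus ?thesis using nonpos by (smt (verit))
    qed
  qed
  moreover have "inner_n n (vecs G i) (vecs G i) = 1" if "i \<in> {1..n}" for i
    using that unfolding L_union_R by (auto simp: inner_vecs_L_L inner_vecs_R_R)
  ultimately show ?thesis by (simp add: fj_feasible_def)
qed

lemma objective_sum_pairs_L:
  "(\<Sum>e\<in>pairs_L. of_bool (G e) * (1 - inner_n n (vecs G (fst e)) (vecs G (snd e)))) =
   (\<Sum>e\<in>pairs_L. of_bool (G e)) - penalty G"
proof -
  have "(\<Sum>e\<in>pairs_L. of_bool (G e) * (1 - inner_n n (vecs G (fst e)) (vecs G (snd e)))) =
        (\<Sum>e\<in>pairs_L. of_bool (G e) - of_bool (G e) * inner_L G (fst e) (snd e))"
    by (intro sum.cong refl) (auto simp: inner_vecs_L_L dest: mem_pairs_L)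
  thus ?thesis by (simp add: sum_subtractf penalty_def)
qed

lemma objective_sum_L_times_R:
  "(\<Sum>e\<in>L \<times> R. of_bool (G e) * (1 - inner_n n (vecs G (fst e)) (vecs G (snd e)))) =
   (\<Sum>e\<in>L \<times> R. of_bool (G e)) + (1 - q) * (\<Sum>i\<in>L. phi G i * deg_R G i)"
proof -
  have "of_bool (G e) * (1 - inner_n n (vecs G (fst e)) (vecs G (snd e))) =
        of_bool (G e) + (1 - q) * (phi G (fst e) * of_bool (G e))" if "e \<in> L \<times> R" for e
    using that by (cases e) (simp add: inner_vecs_L_R dev_def of_bool_def algebra_simps)
  hence "(\<Sum>e\<in>L \<times> R. of_bool (G e) * (1 - inner_n n (vecs G (fst e)) (vecs G (snd e)))) =
         (\<Sum>e\<in>L \<times> R. of_bool (G e) + (1 - q) * (phi G (fst e) * of_bool (G e)))"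
    by (rule sum.cong[OF refl])
  also have "\<dots> = (\<Sum>e\<in>L \<times> R. of_bool (G e)) + (1 - q) * (\<Sum>i\<in>L. \<Sum>j\<in>R. phi G i * of_bool (G (i, j)))"
    by (simp add: sum.distrib sum_distrib_left sum.cartesian_product case_prod_beta)
  finally show ?thesis by (simp add: deg_R_def sum_distrib_left)
qed

lemma objective_sum_pairs_R:
  "(\<Sum>e\<in>pairs_R. of_bool (G e) * (1 - inner_n n (vecs G (fst e)) (vecs G (snd e)))) =
   (\<Sum>e\<in>pairs_R. of_bool (G e))"
  by (intro sum.cong refl) (auto simp: pairs_R_def inner_vecs_R_R)

lemma fj_objective_vecs:
  "fj_objective n k G (vecs G) =
     (real k - 1) / real k * (edge_count G + (1 - q) * (\<Sum>i\<in>L. phi G i * deg_R G i) - penalty G)"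
  unfolding fj_objective_eq sum_pairs_split[where f = "\<lambda>e. of_bool (G e) * _ e"]
    objective_sum_pairs_L objective_sum_L_times_R objective_sum_pairs_R
  by (simp add: edge_count_def sum_pairs_split[where f = "\<lambda>e. of_bool (G e)"] algebra_simps)

end

section \<open>The gain from the edges between the halves\<close>

context gnp_halves
begin

definition deg_cap :: real where "deg_cap = 2 * (real r * q)"

definition deg_trunc :: "(nat \<times> nat \<Rightarrow> bool) \<Rightarrow> nat \<Rightarrow> real" where
  "deg_trunc G i = min (deg_R G i) deg_cap"

lemma rq_pos: "0 < real r * q"
  using r_ge_1 q_pos by simp

lemma deg_trunc_nonneg: "0 \<le> deg_trunc G i"
  using deg_R_nonneg rq_pos by (simp add: deg_trunc_def deg_cap_def)

lemma depends_only_on_deg_trunc: "depends_only_on (\<lambda>G. deg_trunc G i) (edges_to_R i)"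
  unfolding deg_trunc_def by (rule depends_only_on_comp[OF depends_only_on_deg_R])

lemma deg_R_sub_deg_trunc_le: "deg_R G i - deg_trunc G i \<le> (deg_R G i - r * q)\<^sup>2 / (r * q)"
proof (cases "deg_R G i \<le> deg_cap")
  case True
  thus ?thesis using rq_pos by (simp add: deg_trunc_def)
next
  case False
  hence A: "r * q \<le> deg_R G i - r * q" unfolding deg_cap_def by linarith
  hence "0 \<le> deg_R G i - r * q" using rq_pos by linarith
  with A have "(deg_R G i - r * q) * (r * q) \<le> (deg_R G i - r * q) * (deg_R G i - r * q)"
    by (rule mult_left_mono)
  hence "(deg_R G i - r * q) * (r * q) \<le> (deg_R G i - r * q)\<^sup>2"
    by (simp add: power2_eq_square)
  hence "deg_R G i - r * q \<le> (deg_R G i - r * q)\<^sup>2 / (r * q)"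
    using rq_pos by (simp add: le_divide_eq)
  moreover have "deg_trunc G i = deg_cap" using False by (simp add: deg_trunc_def)
  ultimately show ?thesis using rq_pos unfolding deg_cap_def by linarith
qed

lemma E_deg_trunc_ge: "i \<in> L \<Longrightarrow> r * q - 1 \<le> E (\<lambda>G. deg_trunc G i)"
proof -
  assume i: "i \<in> L"
  have "E (\<lambda>G. deg_R G i - deg_trunc G i) \<le> E (\<lambda>G. (deg_R G i - r * q)\<^sup>2 / (r * q))"
    by (rule E_mono) (rule deg_R_sub_deg_trunc_le)
  also have "\<dots> = 1 - q" using variance_deg_R[OF i] q_pos r_ge_1 by simp
  finally show ?thesis using E_deg_R[OF i] q_pos by (simp add: E_diff)
qed

lemma E_deg_trunc_sq_le: "i \<in> L \<Longrightarrow> E (\<lambda>G. (deg_trunc G i)\<^sup>2) \<le> 2 * (r * q)\<^sup>2"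
proof -
  assume i: "i \<in> L"
  have "(deg_trunc G i)\<^sup>2 \<le> deg_cap * deg_R G i" for G
    unfolding power2_eq_square
    by (intro mult_mono) (auto simp: deg_trunc_def deg_cap_def deg_R_nonneg rq_pos less_imp_le)
  hence "E (\<lambda>G. (deg_trunc G i)\<^sup>2) \<le> E (\<lambda>G. deg_cap * deg_R G i)" by (intro E_mono)
  thus ?thesis using E_deg_R[OF i] by (simp add: deg_cap_def power2_eq_square)
qed

lemma variance_sum_deg_trunc_le:
  "E (\<lambda>G. ((\<Sum>i\<in>L. deg_trunc G i) - (\<Sum>i\<in>L. E (\<lambda>G. deg_trunc G i)))\<^sup>2) \<le> h * (2 * (r * q)\<^sup>2)"
proof -
  have "E (\<lambda>G. ((\<Sum>i\<in>L. deg_trunc G i) - (\<Sum>i\<in>L. E (\<lambda>G. deg_trunc G i)))\<^sup>2) =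
        (\<Sum>i\<in>L. E (\<lambda>G. (deg_trunc G i)\<^sup>2) - (E (\<lambda>G. deg_trunc G i))\<^sup>2)"
    by (intro variance_sum_uncorrelated E_mult_indep[OF edges_to_R_in_pairs edges_to_R_in_pairs
          edges_to_R_disjoint depends_only_on_deg_trunc depends_only_on_deg_trunc]) simp_all
  also have "\<dots> \<le> (\<Sum>i\<in>L. 2 * (r * q)\<^sup>2)"
    by (intro sum_mono) (smt (verit) E_deg_trunc_sq_le zero_le_power2)
  finally show ?thesis by simp
qed

lemma prob_sum_deg_trunc_small:
  assumes rq: "2 \<le> real r * q"
  shows "Pr {G. (\<Sum>i\<in>L. deg_trunc G i) < real h * (real r * q) / 4} \<le> 96 / n"
proof -
  define a where "a = real h * (real r * q) / 4"
  have a_pos: "0 < a" using h_ge_1 rq_pos by (simp add: a_def)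
  have "real h * (r * q - 1) \<le> (\<Sum>i\<in>L. E (\<lambda>G. deg_trunc G i))"
    using sum_mono[OF E_deg_trunc_ge, of L] by simp
  moreover have "real h * (r * q / 2) \<le> real h * (r * q - 1)"
    using rq by (intro mult_left_mono) (linarith, simp)
  moreover have "real h * (r * q / 2) = 2 * a" by (simp add: a_def)
  ultimately have "{G. (\<Sum>i\<in>L. deg_trunc G i) < a} \<subseteq>
                   {G. a \<le> \<bar>(\<Sum>i\<in>L. deg_trunc G i) - (\<Sum>i\<in>L. E (\<lambda>G. deg_trunc G i))\<bar>}"
    by auto
  hence "Pr {G. (\<Sum>i\<in>L. deg_trunc G i) < a} \<le>
         Pr {G. a \<le> \<bar>(\<Sum>i\<in>L. deg_trunc G i) - (\<Sum>i\<in>L. E (\<lambda>G. deg_trunc G i))\<bar>}"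
    by (intro measure_pmf.finite_measure_mono) simp_all
  also have "\<dots> \<le> E (\<lambda>G. ((\<Sum>i\<in>L. deg_trunc G i) - (\<Sum>i\<in>L. E (\<lambda>G. deg_trunc G i)))\<^sup>2) / a\<^sup>2"
    by (rule chebyshev[OF a_pos])
  also have "\<dots> \<le> h * (2 * (r * q)\<^sup>2) / a\<^sup>2"
    by (intro divide_right_mono variance_sum_deg_trunc_le) simp
  also have "\<dots> = 32 / h"
    using h_ge_1 q_pos r_ge_1 by (simp add: a_def power2_eq_square field_simps)
  also have "\<dots> \<le> 96 / n"
    using n_le_3h h_ge_1 n_ge_2 by (simp add: field_simps)
  finally show ?thesis by (simp add: a_def)
qed

lemma deg_cap_bound: "1 + eps\<^sup>2 * (r * q\<^sup>2) + eps\<^sup>2 * deg_cap \<le> 4"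
proof -
  have "eps\<^sup>2 * (r * q\<^sup>2) + eps\<^sup>2 * deg_cap = r * q * (2 + q) / (real n * q)"
    unfolding eps_sq deg_cap_def using q_pos n_ge_2 by (simp add: field_simps power2_eq_square)
  also have "\<dots> \<le> 3"
    using mult_mono[of "r * q" "real n * q" "2 + q" 3] r_le_n q_pos q_le_half nq_pos
    by (simp add: divide_le_eq)
  finally show ?thesis by simp
qed

lemma phi_mul_deg_R_ge:
  "eps * (deg_R G i / sqrt (1 + eps\<^sup>2 * (r * q\<^sup>2) + eps\<^sup>2 * deg_R G i)) \<le> phi G i * deg_R G i"
proof -
  have "dev_norm2 G i \<le> deg_R G i + r * q\<^sup>2"
    using deg_R_nonneg[of G i] q_pos by (simp add: dev_norm2_eq mult_left_le)
  hence "eps\<^sup>2 * dev_norm2 G i \<le> eps\<^sup>2 * (deg_R G i + r * q\<^sup>2)"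
    by (rule mult_left_mono) simp
  hence "sqrt (1 + eps\<^sup>2 * dev_norm2 G i) \<le> sqrt (1 + eps\<^sup>2 * (r * q\<^sup>2) + eps\<^sup>2 * deg_R G i)"
    by (intro real_sqrt_le_mono) (simp add: algebra_simps)
  moreover have "0 < sqrt (1 + eps\<^sup>2 * dev_norm2 G i)"
    using dev_norm2_nonneg[of G i] by (simp add: add_pos_nonneg)
  ultimately have "deg_R G i / sqrt (1 + eps\<^sup>2 * (r * q\<^sup>2) + eps\<^sup>2 * deg_R G i) \<le>
                   deg_R G i / sqrt (1 + eps\<^sup>2 * dev_norm2 G i)"
    using deg_R_nonneg[of G i] by (intro divide_left_mono) auto
  hence "eps * (deg_R G i / sqrt (1 + eps\<^sup>2 * (r * q\<^sup>2) + eps\<^sup>2 * deg_R G i)) \<le>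
         eps * (deg_R G i / sqrt (1 + eps\<^sup>2 * dev_norm2 G i))"
    using eps_pos by (intro mult_left_mono) auto
  thus ?thesis by (simp add: phi_def)
qed

lemma half_deg_trunc_le:
  "deg_trunc G i / 2 \<le> deg_R G i / sqrt (1 + eps\<^sup>2 * (r * q\<^sup>2) + eps\<^sup>2 * deg_R G i)"
proof -
  define a where "a = 1 + eps\<^sup>2 * (r * q\<^sup>2)"
  have a_pos: "0 < a" using q_pos by (simp add: a_def add_pos_nonneg)
  have cap_pos: "0 \<le> deg_cap" using rq_pos by (simp add: deg_cap_def)
  have small: "x / 2 \<le> x / sqrt (a + eps\<^sup>2 * x)" if "0 \<le> x" "x \<le> deg_cap" for x
  proof (rule divide_left_mono)
    have "a + eps\<^sup>2 * x \<le> 4" using deg_cap_bound that unfolding a_def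
      by (smt (verit) mult_left_mono zero_le_power2)
    thus "sqrt (a + eps\<^sup>2 * x) \<le> 2" using real_sqrt_le_mono[of _ 4] by simp
  qed (use that a_pos in \<open>auto intro: add_pos_nonneg\<close>)
  show ?thesis
    unfolding a_def[symmetric]
  proof (cases "deg_R G i \<le> deg_cap")
    case True
    thus "deg_trunc G i / 2 \<le> deg_R G i / sqrt (a + eps\<^sup>2 * deg_R G i)"
      using small[OF deg_R_nonneg True] by (simp add: deg_trunc_def)
  next
    case False
    have "deg_cap / sqrt (a + eps\<^sup>2 * deg_cap) \<le> deg_R G i / sqrt (a + eps\<^sup>2 * deg_R G i)"
      using False cap_pos a_pos by (intro frac_sqrt_mono) auto
    moreover have "deg_trunc G i = deg_cap" using False by (simp add: deg_trunc_def)
    ultimately show "deg_trunc G i / 2 \<le> deg_R G i / sqrt (a + eps\<^sup>2 * deg_R G i)"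
      using small[OF cap_pos order_refl] by linarith
  qed
qed

lemma deg_trunc_gain: "eps / 2 * deg_trunc G i \<le> phi G i * deg_R G i"
proof -
  have "eps / 2 * deg_trunc G i = eps * (deg_trunc G i / 2)" by simp
  also have "\<dots> \<le> eps * (deg_R G i / sqrt (1 + eps\<^sup>2 * (r * q\<^sup>2) + eps\<^sup>2 * deg_R G i))"
    using eps_pos by (intro mult_left_mono half_deg_trunc_le) simp
  also have "\<dots> \<le> phi G i * deg_R G i" by (rule phi_mul_deg_R_ge)
  finally show ?thesis .
qed

end

section \<open>The penalty from the edges inside the first half\<close>

context gnp_halves
begin

definition col_sum :: "(nat \<times> nat \<Rightarrow> bool) \<Rightarrow> nat \<Rightarrow> real" where
  "col_sum G t = (\<Sum>i\<in>L. phi G i * dev G i t)"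

definition inner_L_sum :: "(nat \<times> nat \<Rightarrow> bool) \<Rightarrow> real" where
  "inner_L_sum G = (\<Sum>e\<in>pairs_L. inner_L G (fst e) (snd e))"

definition fluct_term :: "nat \<times> nat \<Rightarrow> (nat \<times> nat \<Rightarrow> bool) \<Rightarrow> real" where
  "fluct_term e G = (of_bool (G e) - q) * inner_L G (fst e) (snd e)"

definition fluct :: "(nat \<times> nat \<Rightarrow> bool) \<Rightarrow> real" where
  "fluct G = (\<Sum>e\<in>pairs_L. fluct_term e G)"

lemma inner_L_sum_le: "2 * inner_L_sum G \<le> (\<Sum>t\<in>R. (col_sum G t)\<^sup>2)"
proof -
  define u where "u t i = phi G i * dev G i t" for t i
  have "inner_L G i j = (\<Sum>t\<in>R. u t i * u t j)" for i j
    by (simp add: inner_L_def dev_inner_def u_def sum_distrib_left mult_ac)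
  hence "inner_L_sum G = (\<Sum>i\<in>L. \<Sum>j\<in>{j\<in>L. i < j}. \<Sum>t\<in>R. u t i * u t j)"
    unfolding inner_L_sum_def sum_pairs_L by simp
  also have "\<dots> = (\<Sum>i\<in>L. \<Sum>t\<in>R. \<Sum>j\<in>{j\<in>L. i < j}. u t i * u t j)"
    by (intro sum.cong refl sum.swap)
  also have "\<dots> = (\<Sum>t\<in>R. \<Sum>i\<in>L. \<Sum>j\<in>{j\<in>L. i < j}. u t i * u t j)"
    by (rule sum.swap)
  finally have "2 * inner_L_sum G = (\<Sum>t\<in>R. 2 * (\<Sum>i\<in>L. \<Sum>j\<in>{j\<in>L. i < j}. u t i * u t j))"
    by (simp add: sum_distrib_left)
  also have "\<dots> = (\<Sum>t\<in>R. (\<Sum>i\<in>L. u t i)\<^sup>2 - (\<Sum>i\<in>L. (u t i)\<^sup>2))"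
    by (simp add: sum_less_pairs_eq)
  also have "\<dots> \<le> (\<Sum>t\<in>R. (\<Sum>i\<in>L. u t i)\<^sup>2)"
    by (intro sum_mono) (simp add: sum_nonneg)
  finally show ?thesis by (simp add: col_sum_def u_def)
qed

lemma penalty_le: "penalty G \<le> \<bar>fluct G\<bar> + q / 2 * (\<Sum>t\<in>R. (col_sum G t)\<^sup>2)"
proof -
  have "penalty G = (\<Sum>e\<in>pairs_L. fluct_term e G + q * inner_L G (fst e) (snd e))"
    unfolding penalty_def fluct_term_def by (intro sum.cong refl) (simp add: algebra_simps)
  hence "penalty G = fluct G + q * inner_L_sum G"
    by (simp only: sum.distrib fluct_def inner_L_sum_def sum_distrib_left)
  moreover have "q * (2 * inner_L_sum G) \<le> q * (\<Sum>t\<in>R. (col_sum G t)\<^sup>2)"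
    using inner_L_sum_le[of G] q_pos by (intro mult_left_mono) auto
  ultimately show ?thesis by simp
qed

lemma depends_only_on_inner_L:
  "i \<in> L \<Longrightarrow> j \<in> L \<Longrightarrow> depends_only_on (\<lambda>G. inner_L G i j) (L \<times> R)"
  unfolding inner_L_def
  by (intro depends_only_on_mult depends_only_on_mono[OF depends_only_on_phi edges_to_R_subset])
     (auto simp: depends_only_on_def dev_inner_def dev_def intro!: sum.cong)

lemma E_dev_prod_uncorrelated:
  assumes i: "i \<in> L" and j: "j \<in> L" and ij: "i \<noteq> j" and t: "t \<in> R" and t': "t' \<in> R"
    and tt': "t \<noteq> t'"
  shows "E (\<lambda>G. dev G i t * dev G j t * (dev G i t' * dev G j t')) = 0"
proof -
  have "E (\<lambda>G. dev G i t * (dev G j t * dev G i t' * dev G j t')) =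
        E (\<lambda>G. dev G i t) * E (\<lambda>G. dev G j t * dev G i t' * dev G j t')"
    using i j t t' ij tt'
    by (intro E_mult_indep[of "{(i, t)}" "{(j, t), (i, t'), (j, t')}"] depends_only_on_mult
          depends_only_on_dev) (auto simp: L_R_in_pairs)
  thus ?thesis using E_dev[OF i t] by (simp add: mult_ac)
qed

lemma E_dev_inner_sq_le:
  assumes i: "i \<in> L" and j: "j \<in> L" and ij: "i \<noteq> j"
  shows "E (\<lambda>G. (dev_inner G i j)\<^sup>2) \<le> r * q\<^sup>2"
proof -
  have E_prod: "E (\<lambda>G. dev G i t * dev G j t) = 0" if t: "t \<in> R" for t
  proof -
    have "E (\<lambda>G. dev G i t * dev G j t) = E (\<lambda>G. dev G i t) * E (\<lambda>G. dev G j t)"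
      using L_R_in_pairs[OF i t] L_R_in_pairs[OF j t] ij
      by (intro E_mult_indep[of "{(i, t)}" "{(j, t)}"] depends_only_on_dev) auto
    thus ?thesis using E_dev[OF i t] by simp
  qed
  have E_prod_sq: "E (\<lambda>G. (dev G i t * dev G j t)\<^sup>2) \<le> q\<^sup>2" if t: "t \<in> R" for t
  proof -
    have "E (\<lambda>G. (dev G i t)\<^sup>2 * (dev G j t)\<^sup>2) = E (\<lambda>G. (dev G i t)\<^sup>2) * E (\<lambda>G. (dev G j t)\<^sup>2)"
      using L_R_in_pairs[OF i t] L_R_in_pairs[OF j t] ij
      by (intro E_mult_indep[of "{(i, t)}" "{(j, t)}"] depends_only_on_comp[OF depends_only_on_dev]) auto
    also have "\<dots> = (q * (1 - q))\<^sup>2"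
      using E_dev_sq[OF i t] E_dev_sq[OF j t] by (simp add: power2_eq_square)
    also have "\<dots> \<le> q\<^sup>2"
      using q_pos q_le_half by (intro power_mono) (auto simp: mult_le_cancel_left1)
    finally show ?thesis by (simp add: power_mult_distrib)
  qed
  have "E (\<lambda>G. (\<Sum>t\<in>R. dev G i t * dev G j t)\<^sup>2) =
        (\<Sum>t\<in>R. E (\<lambda>G. (dev G i t * dev G j t)\<^sup>2) - (E (\<lambda>G. dev G i t * dev G j t))\<^sup>2)
        + (\<Sum>t\<in>R. E (\<lambda>G. dev G i t * dev G j t))\<^sup>2"
  proof (rule E_square_sum_uncorrelated)
    fix t t' assume "t \<in> R" "t' \<in> R" "t \<noteq> t'"
    thus "E (\<lambda>G. dev G i t * dev G j t * (dev G i t' * dev G j t')) =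
          E (\<lambda>G. dev G i t * dev G j t) * E (\<lambda>G. dev G i t' * dev G j t')"
      using E_dev_prod_uncorrelated[OF i j ij] E_prod by simp
  qed simp
  hence "E (\<lambda>G. (dev_inner G i j)\<^sup>2) = (\<Sum>t\<in>R. E (\<lambda>G. (dev G i t * dev G j t)\<^sup>2))"
    using E_prod by (simp add: dev_inner_def)
  also have "\<dots> \<le> r * q\<^sup>2" using sum_mono[OF E_prod_sq, of R] by simp
  finally show ?thesis .
qed

end

context gnp_halves
begin

lemma E_inner_L_sq_le:
  assumes i: "i \<in> L" and j: "j \<in> L" and ij: "i \<noteq> j"
  shows "E (\<lambda>G. (inner_L G i j)\<^sup>2) \<le> eps ^ 4 * (r * q\<^sup>2)"
proof -
  have "(phi G i * phi G j)\<^sup>2 \<le> (eps * eps)\<^sup>2" for G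
    by (intro power_mono mult_mono phi_le_eps phi_nonneg mult_nonneg_nonneg) (use eps_pos in auto)
  hence "(inner_L G i j)\<^sup>2 \<le> eps ^ 4 * (dev_inner G i j)\<^sup>2" for G
    unfolding inner_L_def power_mult_distrib[of "phi G i * phi G j"]
    by (intro mult_right_mono) (simp_all add: power4_eq_xxxx power2_eq_square mult_ac)
  hence "E (\<lambda>G. (inner_L G i j)\<^sup>2) \<le> E (\<lambda>G. eps ^ 4 * (dev_inner G i j)\<^sup>2)"
    by (intro E_mono)
  also have "\<dots> = eps ^ 4 * E (\<lambda>G. (dev_inner G i j)\<^sup>2)" by simp
  also have "\<dots> \<le> eps ^ 4 * (r * q\<^sup>2)"
    using E_dev_inner_sq_le[OF i j ij] by (intro mult_left_mono) auto
  finally show ?thesis .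
qed

lemma E_fluct_term: "e \<in> pairs_L \<Longrightarrow> E (fluct_term e) = 0"
proof -
  assume e: "e \<in> pairs_L"
  have "E (fluct_term e) = E (\<lambda>G. of_bool (G e) - q) * E (\<lambda>G. inner_L G (fst e) (snd e))"
    unfolding fluct_term_def[abs_def] using e pairs_L_in_pairs pairs_L_disjoint_L_times_R mem_pairs_L[OF e]
    by (intro E_mult_indep[OF _ L_times_R_in_pairs] depends_only_on_coord depends_only_on_inner_L) auto
  thus ?thesis using e pairs_L_in_pairs by (auto simp: E_diff E_edge)
qed

lemma fluct_term_uncorrelated:
  assumes e: "e \<in> pairs_L" and e': "e' \<in> pairs_L" and ee': "e \<noteq> e'"
  shows "E (\<lambda>G. fluct_term e G * fluct_term e' G) = E (fluct_term e) * E (fluct_term e')"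
proof -
  have "E (\<lambda>G. (of_bool (G e) - q) * ((of_bool (G e') - q) *
           inner_L G (fst e) (snd e) * inner_L G (fst e') (snd e'))) =
        E (\<lambda>G. of_bool (G e) - q) *
        E (\<lambda>G. (of_bool (G e') - q) * inner_L G (fst e) (snd e) * inner_L G (fst e') (snd e'))"
    using e e' ee' pairs_L_in_pairs pairs_L_disjoint_L_times_R L_times_R_in_pairs
      mem_pairs_L[OF e] mem_pairs_L[OF e']
    by (intro E_mult_indep[of "{e}" "insert e' (L \<times> R)"] depends_only_on_mult depends_only_on_coord
          depends_only_on_mono[OF depends_only_on_inner_L]) auto
  moreover have "E (\<lambda>G. of_bool (G e) - q) = 0"
    using e pairs_L_in_pairs by (auto simp: E_diff E_edge)
  ultimately show ?thesis
    using E_fluct_term[OF e] by (simp add: fluct_term_def mult_ac)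
qed

lemma E_fluct_term_sq_le:
  assumes e: "e \<in> pairs_L"
  shows "E (\<lambda>G. (fluct_term e G)\<^sup>2) \<le> q * (eps ^ 4 * (r * q\<^sup>2))"
proof -
  have "E (\<lambda>G. (fluct_term e G)\<^sup>2) =
        E (\<lambda>G. (of_bool (G e) - q)\<^sup>2) * E (\<lambda>G. (inner_L G (fst e) (snd e))\<^sup>2)"
    unfolding fluct_term_def power_mult_distrib
    using e pairs_L_in_pairs pairs_L_disjoint_L_times_R mem_pairs_L[OF e]
    by (intro E_mult_indep[OF _ L_times_R_in_pairs] depends_only_on_coord
          depends_only_on_comp[OF depends_only_on_inner_L]) auto
  also have "E (\<lambda>G. (of_bool (G e) - q)\<^sup>2) = q * (1 - q)"
  proof -
    have "E (\<lambda>G. (of_bool (G e) - q)\<^sup>2) = E (\<lambda>G. of_bool (G e) * (1 - 2 * q) + q\<^sup>2)"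
      by (intro Bochner_Integration.integral_cong) (auto simp: power2_eq_square algebra_simps)
    also have "\<dots> = q * (1 - 2 * q) + q\<^sup>2"
      using e pairs_L_in_pairs by (auto simp: E_add E_edge)
    finally show ?thesis by (simp add: power2_eq_square algebra_simps)
  qed
  also have "q * (1 - q) * E (\<lambda>G. (inner_L G (fst e) (snd e))\<^sup>2) \<le> q * (eps ^ 4 * (r * q\<^sup>2))"
    using q_pos q_le_half mem_pairs_L[OF e] E_inner_L_sq_le E_nonneg[of "\<lambda>G. (inner_L G _ _)\<^sup>2"]
    by (intro mult_mono) (auto simp: mult_le_cancel_left1)
  finally show ?thesis .
qed

lemma E_fluct_sq_le: "E (\<lambda>G. (fluct G)\<^sup>2) \<le> real n * q"
proof -
  have "E (\<lambda>G. (fluct G)\<^sup>2) = (\<Sum>e\<in>pairs_L. E (\<lambda>G. (fluct_term e G)\<^sup>2))"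
    using variance_sum_uncorrelated[of pairs_L fluct_term] fluct_term_uncorrelated E_fluct_term
    by (simp add: fluct_def[abs_def])
  also have "\<dots> \<le> card pairs_L * (q * (eps ^ 4 * (r * q\<^sup>2)))"
    using sum_mono[OF E_fluct_term_sq_le, of pairs_L] by simp
  also have "\<dots> \<le> real n ^ 2 * (q * (eps ^ 4 * (real n * q\<^sup>2)))"
    using card_pairs_L_le r_le_n q_pos by (intro mult_mono) auto
  also have "\<dots> = real n * q"
  proof -
    have "eps ^ 4 = (1 / (real n * q))\<^sup>2" unfolding eps_sq[symmetric] by (simp flip: power_mult)
    thus ?thesis using q_pos n_ge_2 by (simp add: power2_eq_square field_simps)
  qed
  finally show ?thesis .
qed

end

context gnp_halves
begin

definition phi_of_deg :: "real \<Rightarrow> real" where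
  "phi_of_deg x = eps / sqrt (1 + eps\<^sup>2 * (x * (1 - 2 * q) + r * q\<^sup>2))"

lemma phi_eq_phi_of_deg: "phi G i = phi_of_deg (deg_R G i)"
  by (simp add: phi_def phi_of_deg_def dev_norm2_eq)

lemma phi_of_deg_step: "0 \<le> x \<Longrightarrow> \<bar>phi_of_deg (x + 1) - phi_of_deg x\<bar> \<le> eps ^ 3 / 2"
proof -
  assume x: "0 \<le> x"
  define a b where "a = eps\<^sup>2 * (x * (1 - 2 * q) + r * q\<^sup>2)"
    and "b = eps\<^sup>2 * ((x + 1) * (1 - 2 * q) + r * q\<^sup>2)"
  have a: "0 \<le> a" using x q_le_half by (simp add: a_def)
  have ba: "b - a = eps\<^sup>2 * (1 - 2 * q)" by (simp add: a_def b_def algebra_simps)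
  moreover have "0 \<le> eps\<^sup>2 * (1 - 2 * q)" using q_le_half by simp
  ultimately have ab: "a \<le> b" by linarith
  have "b - a \<le> eps\<^sup>2" using ba q_pos by (simp add: mult_left_le)
  hence "0 \<le> 1 / sqrt (1 + a) - 1 / sqrt (1 + b)" "1 / sqrt (1 + a) - 1 / sqrt (1 + b) \<le> eps\<^sup>2 / 2"
    using inv_sqrt_one_plus_diff[OF a ab] by auto
  moreover have "phi_of_deg x - phi_of_deg (x + 1) = eps * (1 / sqrt (1 + a) - 1 / sqrt (1 + b))"
    by (simp add: phi_of_deg_def a_def b_def algebra_simps)
  ultimately show ?thesis
    using eps_pos mult_left_mono[of _ "eps\<^sup>2 / 2" eps]
    by (simp add: abs_minus_commute power3_eq_cube power2_eq_square)
qed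

text \<open>Although phi G i and dev G i t are dependent, phi G i sees the edge (i, t) only through
  a unit change of deg_R G i, so their correlation is of order q eps^3.\<close>

lemma E_phi_dev_eq:
  assumes i: "i \<in> L" and t: "t \<in> R"
  shows "E (\<lambda>G. phi G i * dev G i t) =
         q * (1 - q) * E (\<lambda>G. phi_of_deg ((\<Sum>s\<in>R - {t}. of_bool (G (i, s))) + 1) -
                             phi_of_deg (\<Sum>s\<in>R - {t}. of_bool (G (i, s))))"
proof -
  define d :: "(nat \<times> nat \<Rightarrow> bool) \<Rightarrow> real" where "d G = (\<Sum>s\<in>R - {t}. of_bool (G (i, s)))" for G
  define A where "A = Pair i ` (R - {t})"
  have A: "A \<subseteq> pairs n" "{(i, t)} \<inter> A = {}" "{(i, t)} \<subseteq> pairs n"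
    using i t by (auto simp: A_def L_R_in_pairs)
  have d: "depends_only_on d A"
    by (auto simp: depends_only_on_def d_def A_def intro!: sum.cong)
  have "phi G i * dev G i t =
        of_bool (G (i, t)) * ((1 - q) * phi_of_deg (d G + 1)) +
        (1 - of_bool (G (i, t))) * (- q * phi_of_deg (d G))" for G
    using t by (cases "G (i, t)") (simp_all add: phi_eq_phi_of_deg deg_R_def d_def dev_def
                                      sum.remove add.commute)
  hence "E (\<lambda>G. phi G i * dev G i t) =
         E (\<lambda>G. of_bool (G (i, t)) * ((1 - q) * phi_of_deg (d G + 1))) +
         E (\<lambda>G. (1 - of_bool (G (i, t))) * (- q * phi_of_deg (d G)))"
    by (simp only: E_add)
  also have "\<dots> = q * E (\<lambda>G. (1 - q) * phi_of_deg (d G + 1)) + (1 - q) * E (\<lambda>G. - q * phi_of_deg (d G))"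
    using E_mult_indep[OF A(3) A(1) A(2) depends_only_on_coord
            depends_only_on_comp[OF d, of "\<lambda>y. (1 - q) * phi_of_deg (y + 1)"], of "(i, t)" of_bool]
      E_mult_indep[OF A(3) A(1) A(2) depends_only_on_coord
            depends_only_on_comp[OF d, of "\<lambda>y. - q * phi_of_deg y"], of "(i, t)" "\<lambda>b. 1 - of_bool b"]
      E_edge[OF L_R_in_pairs[OF i t]]
    by (simp add: E_diff)
  also have "\<dots> = q * (1 - q) * E (\<lambda>G. phi_of_deg (d G + 1) - phi_of_deg (d G))"
    by (simp add: E_diff algebra_simps)
  finally show ?thesis by (simp add: d_def)
qed

lemma abs_E_phi_dev_le:
  assumes i: "i \<in> L" and t: "t \<in> R"
  shows "\<bar>E (\<lambda>G. phi G i * dev G i t)\<bar> \<le> q * eps ^ 3 / 2"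
proof -
  let ?d = "\<lambda>G. \<Sum>s\<in>R - {t}. of_bool (G (i, s))"
  have "\<bar>E (\<lambda>G. phi_of_deg (?d G + 1) - phi_of_deg (?d G))\<bar> \<le>
        E (\<lambda>G. \<bar>phi_of_deg (?d G + 1) - phi_of_deg (?d G)\<bar>)"
    by (rule integral_abs_bound)
  also have "\<dots> \<le> E (\<lambda>G. eps ^ 3 / 2)"
    by (intro E_mono phi_of_deg_step sum_nonneg) simp
  finally have "\<bar>E (\<lambda>G. phi_of_deg (?d G + 1) - phi_of_deg (?d G))\<bar> \<le> eps ^ 3 / 2" by simp
  hence "q * (1 - q) * \<bar>E (\<lambda>G. phi_of_deg (?d G + 1) - phi_of_deg (?d G))\<bar> \<le> q * 1 * (eps ^ 3 / 2)"
    using q_pos q_le_half by (intro mult_mono) auto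
  thus ?thesis using q_pos q_le_half by (simp add: E_phi_dev_eq[OF i t] abs_mult)
qed

lemma E_col_sum_sq_le:
  assumes t: "t \<in> R"
  shows "E (\<lambda>G. (col_sum G t)\<^sup>2) \<le> h * (eps\<^sup>2 * q) + (h * (q * eps ^ 3 / 2))\<^sup>2"
proof -
  define X where "X i G = phi G i * dev G i t" for i :: nat and G :: "nat \<times> nat \<Rightarrow> bool"
  have dep_X: "depends_only_on (X i) (edges_to_R i)" for i
    unfolding X_def using t
    by (intro depends_only_on_mult depends_only_on_phi depends_only_on_dev) (auto simp: edges_to_R_def)
  have var_X: "E (\<lambda>G. (X i G)\<^sup>2) - (E (X i))\<^sup>2 \<le> eps\<^sup>2 * q" if i: "i \<in> L" for i
  proof -
    have "(X i G)\<^sup>2 \<le> eps\<^sup>2 * (dev G i t)\<^sup>2" for G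
      using power_mono[OF phi_le_eps phi_nonneg, of G i]
      by (simp add: X_def power_mult_distrib mult_right_mono)
    hence "E (\<lambda>G. (X i G)\<^sup>2) \<le> E (\<lambda>G. eps\<^sup>2 * (dev G i t)\<^sup>2)" by (intro E_mono)
    also have "\<dots> = eps\<^sup>2 * (q * (1 - q))" using E_dev_sq[OF i t] by simp
    also have "\<dots> \<le> eps\<^sup>2 * q" using q_pos by (intro mult_left_mono) (auto simp: mult_le_cancel_left1)
    finally show ?thesis using zero_le_power2[of "E (X i)"] by linarith
  qed
  have "\<bar>\<Sum>i\<in>L. E (X i)\<bar> \<le> (\<Sum>i\<in>L. \<bar>E (X i)\<bar>)" by (rule sum_abs)
  also have "\<dots> \<le> (\<Sum>i\<in>L. q * eps ^ 3 / 2)"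
    unfolding X_def by (intro sum_mono abs_E_phi_dev_le[OF _ t])
  finally have "\<bar>\<Sum>i\<in>L. E (X i)\<bar> \<le> (\<Sum>i\<in>L. q * eps ^ 3 / 2)" .
  hence mean_X: "(\<Sum>i\<in>L. E (X i))\<^sup>2 \<le> (\<Sum>i\<in>L. q * eps ^ 3 / 2)\<^sup>2"
    using power_mono[of "\<bar>\<Sum>i\<in>L. E (X i)\<bar>" _ 2] by simp
  have "E (\<lambda>G. (\<Sum>i\<in>L. X i G)\<^sup>2) = (\<Sum>i\<in>L. E (\<lambda>G. (X i G)\<^sup>2) - (E (X i))\<^sup>2) + (\<Sum>i\<in>L. E (X i))\<^sup>2"
    by (intro E_square_sum_uncorrelated E_mult_indep[OF edges_to_R_in_pairs edges_to_R_in_pairs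
          edges_to_R_disjoint dep_X dep_X]) simp_all
  also have "\<dots> \<le> (\<Sum>i\<in>L. eps\<^sup>2 * q) + (\<Sum>i\<in>L. q * eps ^ 3 / 2)\<^sup>2"
    by (intro add_mono sum_mono var_X mean_X)
  finally show ?thesis by (simp add: col_sum_def X_def)
qed

lemma E_col_sum_sq_le_2:
  assumes nq: "1 \<le> real n * q" and t: "t \<in> R"
  shows "E (\<lambda>G. (col_sum G t)\<^sup>2) \<le> 2"
proof -
  have "h * (eps\<^sup>2 * q) \<le> 1"
    using h_le_n n_ge_2 q_pos by (simp add: eps_sq field_simps)
  moreover have "(h * (q * eps ^ 3 / 2))\<^sup>2 \<le> 1"
  proof -
    have "(eps ^ 3)\<^sup>2 = (1 / (real n * q)) ^ 3" unfolding eps_sq[symmetric] by (simp flip: power_mult)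
    hence "(h * (q * eps ^ 3 / 2))\<^sup>2 = real h ^ 2 / (4 * real n ^ 3 * q)"
      using q_pos n_ge_2 by (simp add: power_mult_distrib power_divide field_simps power2_eq_square
                                       power3_eq_cube)
    moreover have "real h ^ 2 \<le> real n ^ 2 * (4 * (real n * q))"
    proof -
      have "real h ^ 2 \<le> real n ^ 2 * 1" using h_le_n by (simp add: power_mono)
      also have "\<dots> \<le> real n ^ 2 * (4 * (real n * q))" using nq by (intro mult_left_mono) auto
      finally show ?thesis .
    qed
    ultimately show ?thesis
      using q_pos n_ge_2 by (simp add: divide_le_eq power2_eq_square power3_eq_cube algebra_simps)
  qed
  ultimately show ?thesis using E_col_sum_sq_le[OF t] by linarith
qed

end

context gnp_halves
begin

definition slack :: real where "slack = real n * sqrt (real n * q) / 768"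

lemma slack_pos: "0 < slack"
  using nq_pos n_ge_2 by (simp add: slack_def)

lemma slack_sq: "slack\<^sup>2 = real n ^ 3 * q / 768\<^sup>2"
  using nq_pos by (simp add: slack_def power_divide power_mult_distrib power3_eq_cube power2_eq_square)

lemma prob_edge_count_small: "Pr {G. edge_count G < card (pairs n) * q - slack} \<le> 768\<^sup>2 / n"
proof -
  have "Pr {G. edge_count G < card (pairs n) * q - slack} \<le>
        Pr {G. slack \<le> \<bar>edge_count G - card (pairs n) * q\<bar>}"
    by (rule measure_pmf.finite_measure_mono) auto
  also have "\<dots> \<le> card (pairs n) * q * (1 - q) / slack\<^sup>2"
    using chebyshev[OF slack_pos, of "\<lambda>G. edge_count G - card (pairs n) * q"]
    by (simp add: variance_edge_count)
  also have "\<dots> \<le> real n ^ 2 * q / slack\<^sup>2"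
  proof (intro divide_right_mono)
    have "card (pairs n) * q * (1 - q) \<le> card (pairs n) * q" using q_pos by (simp add: mult_left_le)
    also have "\<dots> \<le> real n ^ 2 * q" using card_pairs_le q_pos by (intro mult_right_mono) auto
    finally show "card (pairs n) * q * (1 - q) \<le> real n ^ 2 * q" .
  qed simp
  also have "\<dots> = 768\<^sup>2 / n"
    unfolding slack_sq using q_pos n_ge_2 by (simp add: field_simps power2_eq_square power3_eq_cube)
  finally show ?thesis .
qed

lemma prob_fluct_large: "Pr {G. slack \<le> \<bar>fluct G\<bar>} \<le> 768\<^sup>2 / real n ^ 2"
proof -
  have "Pr {G. slack \<le> \<bar>fluct G\<bar>} \<le> E (\<lambda>G. (fluct G)\<^sup>2) / slack\<^sup>2"
    by (rule chebyshev[OF slack_pos])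
  also have "\<dots> \<le> real n * q / slack\<^sup>2"
    by (intro divide_right_mono E_fluct_sq_le) simp
  also have "\<dots> = 768\<^sup>2 / real n ^ 2"
    unfolding slack_sq using q_pos n_ge_2 by (simp add: field_simps power2_eq_square power3_eq_cube)
  finally show ?thesis .
qed

lemma prob_col_sum_large:
  assumes nq: "1 \<le> real n * q"
  shows "Pr {G. slack \<le> q / 2 * (\<Sum>t\<in>R. (col_sum G t)\<^sup>2)} \<le> 768 / sqrt n"
proof -
  have "Pr {G. slack \<le> q / 2 * (\<Sum>t\<in>R. (col_sum G t)\<^sup>2)} \<le>
        E (\<lambda>G. q / 2 * (\<Sum>t\<in>R. (col_sum G t)\<^sup>2)) / slack"
    using q_pos by (intro markov slack_pos) (simp add: sum_nonneg)
  also have "E (\<lambda>G. q / 2 * (\<Sum>t\<in>R. (col_sum G t)\<^sup>2)) \<le> q / 2 * (2 * real n)"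
  proof -
    have "(\<Sum>t\<in>R. E (\<lambda>G. (col_sum G t)\<^sup>2)) \<le> (\<Sum>t\<in>R. 2)"
      by (intro sum_mono E_col_sum_sq_le_2[OF nq])
    hence "(\<Sum>t\<in>R. E (\<lambda>G. (col_sum G t)\<^sup>2)) \<le> 2 * real n" using r_le_n by simp
    thus ?thesis using q_pos by (simp add: E_sum)
  qed
  hence "E (\<lambda>G. q / 2 * (\<Sum>t\<in>R. (col_sum G t)\<^sup>2)) / slack \<le> q / 2 * (2 * real n) / slack"
    using slack_pos by (intro divide_right_mono) auto
  also have "\<dots> = 768 * sqrt q / sqrt n"
  proof -
    have "q = sqrt q * sqrt q" using q_pos by simp
    thus ?thesis using q_pos n_ge_2 by (simp add: slack_def real_sqrt_mult field_simps)
  qed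
  also have "\<dots> \<le> 768 / sqrt n"
    using q_le_half n_ge_2 by (simp add: divide_right_mono)
  finally show ?thesis .
qed

end

section \<open>Feasibility of the vector system\<close>

context gnp_halves
begin

lemma dev_norm2_ge: "deg_R G i / 4 \<le> dev_norm2 G i"
proof -
  have "deg_R G i * q\<^sup>2 \<le> r * q\<^sup>2" using deg_R_le_r[of G i] by (intro mult_right_mono) auto
  hence "deg_R G i * (1 - q)\<^sup>2 \<le> dev_norm2 G i"
    by (simp add: dev_norm2_eq power2_eq_square algebra_simps)
  moreover have "(1 / 2) ^ 2 \<le> (1 - q)\<^sup>2" using q_le_half by (intro power_mono) auto
  hence "deg_R G i * (1 / 4) \<le> deg_R G i * (1 - q)\<^sup>2"
    using deg_R_nonneg[of G i] by (intro mult_left_mono) (auto simp: power2_eq_square)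
  ultimately show ?thesis by simp
qed

lemma phi_mul_deg_R_le: "phi G i * deg_R G i \<le> 2 * sqrt n"
proof -
  define d where "d = deg_R G i"
  define a where "a = 1 + eps\<^sup>2 * d / 4"
  have d: "0 \<le> d" "d \<le> n"
    using deg_R_nonneg[of G i] deg_R_le_r[of G i] r_le_n by (auto simp: d_def)
  have a: "1 \<le> a" using d by (simp add: a_def)
  have "a \<le> 1 + eps\<^sup>2 * dev_norm2 G i"
    using mult_left_mono[OF dev_norm2_ge[of G i], of "eps\<^sup>2"] by (simp add: a_def d_def)
  hence "phi G i * d \<le> eps * d / sqrt a"
    using a eps_pos d by (simp add: phi_def divide_left_mono mult_nonneg_nonneg)
  also have "\<dots> \<le> 2 * sqrt d"
  proof (rule power2_le_imp_le)
    have "eps\<^sup>2 * d\<^sup>2 \<le> 4 * d * a" by (simp add: a_def algebra_simps power2_eq_square d)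
    hence "(eps * d / sqrt a)\<^sup>2 \<le> 4 * d"
      using a by (simp add: power_divide power_mult_distrib divide_le_eq)
    thus "(eps * d / sqrt a)\<^sup>2 \<le> (2 * sqrt d)\<^sup>2" using d by (simp add: power_mult_distrib)
  qed (use d in simp)
  also have "\<dots> \<le> 2 * sqrt n" using d by simp
  finally show ?thesis by (simp add: d_def)
qed

lemma inner_L_ge_sparse:
  assumes k: "2 \<le> k" and sparse: "16 * q * (real k - 1)\<^sup>2 \<le> 1"
  shows "- 1 / (real k - 1) \<le> inner_L G i j"
proof -
  have "phi G i * phi G j * (- q * (deg_R G i + deg_R G j)) \<le> inner_L G i j"
    unfolding inner_L_def using dev_inner_ge[of G i j]
    by (intro mult_left_mono mult_nonneg_nonneg phi_nonneg)
  moreover have "phi G i * phi G j * (q * (deg_R G i + deg_R G j)) \<le> 4 * sqrt q"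
  proof -
    have "phi G j * (phi G i * deg_R G i) + phi G i * (phi G j * deg_R G j) \<le>
          eps * (2 * sqrt n) + eps * (2 * sqrt n)"
      by (intro add_mono mult_mono phi_le_eps phi_mul_deg_R_le mult_nonneg_nonneg phi_nonneg
            deg_R_nonneg less_imp_le[OF eps_pos])
    hence "q * (phi G j * (phi G i * deg_R G i) + phi G i * (phi G j * deg_R G j)) \<le>
           q * (eps * (2 * sqrt n) + eps * (2 * sqrt n))"
      using q_pos by (intro mult_left_mono) auto
    hence "phi G i * phi G j * (q * (deg_R G i + deg_R G j)) \<le> 4 * (q * eps * sqrt n)"
      by (simp add: algebra_simps)
    also have "q * eps * sqrt n = sqrt q"
      using q_pos n_ge_2 by (simp add: eps_def real_sqrt_mult real_div_sqrt)
    finally show ?thesis .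
  qed
  moreover have "4 * sqrt q \<le> 1 / (real k - 1)"
  proof -
    have "(4 * sqrt q * (real k - 1))\<^sup>2 \<le> 1\<^sup>2"
      using sparse q_pos by (simp add: power_mult_distrib)
    hence "4 * sqrt q * (real k - 1) \<le> 1" by (rule power2_le_imp_le) simp
    thus ?thesis using k by (simp add: le_divide_eq)
  qed
  ultimately show ?thesis by (simp add: algebra_simps)
qed

lemma inner_L_ge_dense:
  assumes k: "2 \<le> k" and tau: "\<tau> = real n * q / (4 * (real k - 1))"
    and codeg: "real r * q\<^sup>2 - \<tau> < codeg_R G i j"
    and deg_i: "deg_R G i < r * q + \<tau>" and deg_j: "deg_R G j < r * q + \<tau>"
  shows "- 1 / (real k - 1) \<le> inner_L G i j"
proof -
  have k1: "0 < real k - 1" using k by simp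
  show ?thesis
  proof (cases "0 \<le> dev_inner G i j")
  case True
  hence "0 \<le> inner_L G i j" unfolding inner_L_def by (intro mult_nonneg_nonneg phi_nonneg)
  moreover have "- 1 / (real k - 1) \<le> 0" using k1 by simp
  ultimately show ?thesis by linarith
next
  case False
  have "q * (deg_R G i + deg_R G j) \<le> q * (2 * (r * q) + 2 * \<tau>)"
    using deg_i deg_j q_pos by (intro mult_left_mono) auto
  moreover have "(2 * q) * \<tau> \<le> 1 * \<tau>" using q_le_half tau q_pos k1 by (intro mult_right_mono) auto
  ultimately have "- 2 * \<tau> < dev_inner G i j"
    using codeg unfolding dev_inner_eq by (simp add: algebra_simps power2_eq_square)
  hence "eps * eps * (- 2 * \<tau>) \<le> eps * eps * dev_inner G i j"
    by (intro mult_left_mono) auto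
  moreover have "phi G i * phi G j \<le> eps * eps"
    by (intro mult_mono phi_le_eps phi_nonneg) (use eps_pos in auto)
  hence "eps * eps * dev_inner G i j \<le> inner_L G i j"
    using False unfolding inner_L_def by (intro mult_right_mono_neg) auto
  ultimately have "eps * eps * (- 2 * \<tau>) \<le> inner_L G i j" by linarith
  moreover have "eps * eps * (- 2 * \<tau>) = - 1 / (2 * (real k - 1))"
    using q_pos n_ge_2 k1 unfolding tau eps_def by (simp add: field_simps)
  moreover have "- 1 / (real k - 1) \<le> - 1 / (2 * (real k - 1))"
    using k1 by (simp add: field_simps)
  ultimately show ?thesis by linarith
  qed
qed

lemma prob_deg_R_large:
  assumes i: "i \<in> L" and tau: "0 \<le> \<tau>"
  shows "Pr {G. r * q + \<tau> \<le> deg_R G i} \<le> exp (-2 * \<tau>\<^sup>2 / r)"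
proof -
  have "Pr {G. (\<Sum>t\<in>R. of_bool (restrict G {(i, t)} (i, t))) \<ge>
               (\<Sum>t\<in>R. E (\<lambda>G. of_bool (restrict G {(i, t)} (i, t)))) + \<tau>}
        \<le> exp (-2 * \<tau>\<^sup>2 / card R)"
    using R_nonempty i tau
    by (intro hoeffding_blocks(2)[where g = "\<lambda>t G. of_bool (G (i, t))"])
       (auto simp: disjoint_family_on_def L_R_in_pairs)
  thus ?thesis using i by (simp add: deg_R_def E_edge L_R_in_pairs)
qed

lemma prob_codeg_R_small:
  assumes i: "i \<in> L" and j: "j \<in> L" and ij: "i \<noteq> j" and tau: "0 \<le> \<tau>"
  shows "Pr {G. codeg_R G i j \<le> r * q\<^sup>2 - \<tau>} \<le> exp (-2 * \<tau>\<^sup>2 / r)"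
proof -
  have E_codeg: "E (\<lambda>G. of_bool (G (i, t) \<and> G (j, t))) = q\<^sup>2" if t: "t \<in> R" for t
  proof -
    have "E (\<lambda>G. of_bool (G (i, t)) * of_bool (G (j, t))) =
          E (\<lambda>G. of_bool (G (i, t))) * E (\<lambda>G. of_bool (G (j, t)))"
      using L_R_in_pairs[OF i t] L_R_in_pairs[OF j t] ij
      by (intro E_mult_indep[of "{(i, t)}" "{(j, t)}"] depends_only_on_coord) auto
    thus ?thesis using i j t by (simp add: of_bool_conj E_edge L_R_in_pairs power2_eq_square)
  qed
  have "Pr {G. (\<Sum>t\<in>R. of_bool (restrict G {(i, t), (j, t)} (i, t) \<and> restrict G {(i, t), (j, t)} (j, t)))
               \<le> (\<Sum>t\<in>R. E (\<lambda>G. of_bool (restrict G {(i, t), (j, t)} (i, t) \<and>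
                                         restrict G {(i, t), (j, t)} (j, t)))) - \<tau>}
        \<le> exp (-2 * \<tau>\<^sup>2 / card R)"
    using R_nonempty i j tau
    by (intro hoeffding_blocks(1)[where g = "\<lambda>t G. of_bool (G (i, t) \<and> G (j, t))"])
       (auto simp: disjoint_family_on_def L_R_in_pairs)
  thus ?thesis using E_codeg by (simp add: codeg_R_def)
qed

end

context gnp_halves
begin

definition atypical :: "real \<Rightarrow> (nat \<times> nat \<Rightarrow> bool) set" where
  "atypical \<tau> = (\<Union>a\<in>L. {G. r * q + \<tau> \<le> deg_R G a}) \<union>
                 (\<Union>e\<in>pairs_L. {G. codeg_R G (fst e) (snd e) \<le> r * q\<^sup>2 - \<tau>})"

lemma inner_L_small_imp_atypical:
  assumes k: "2 \<le> k" and tau: "\<tau> = real n * q / (4 * (real k - 1))"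
    and i: "i \<in> L" and j: "j \<in> L" and ij: "i \<noteq> j"
    and small: "inner_L G i j < - 1 / (real k - 1)"
  shows "G \<in> atypical \<tau>"
proof (rule ccontr)
  assume "G \<notin> atypical \<tau>"
  hence deg: "\<And>a. a \<in> L \<Longrightarrow> deg_R G a < r * q + \<tau>"
    and codeg: "\<And>e. e \<in> pairs_L \<Longrightarrow> r * q\<^sup>2 - \<tau> < codeg_R G (fst e) (snd e)"
    by (auto simp: atypical_def not_le)
  have "codeg_R G i j = codeg_R G j i" by (simp add: codeg_R_def conj_commute)
  hence "r * q\<^sup>2 - \<tau> < codeg_R G i j"
    using codeg[of "(i, j)"] codeg[of "(j, i)"] i j ij by (cases "i < j") (auto simp: pairs_L_def)
  thus False using inner_L_ge_dense[OF k tau _ deg[OF i] deg[OF j]] small by simp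
qed

lemma prob_atypical_le:
  assumes tau: "0 \<le> \<tau>"
  shows "Pr (atypical \<tau>) \<le> (n + real n ^ 2) * exp (-2 * \<tau>\<^sup>2 / r)"
proof -
  have "Pr (atypical \<tau>) \<le>
        Pr (\<Union>a\<in>L. {G. r * q + \<tau> \<le> deg_R G a}) +
        Pr (\<Union>e\<in>pairs_L. {G. codeg_R G (fst e) (snd e) \<le> r * q\<^sup>2 - \<tau>})"
    unfolding atypical_def by (rule Pr_union_le)
  also have "\<dots> \<le> (\<Sum>a\<in>L. Pr {G. r * q + \<tau> \<le> deg_R G a}) +
                  (\<Sum>e\<in>pairs_L. Pr {G. codeg_R G (fst e) (snd e) \<le> r * q\<^sup>2 - \<tau>})"
    by (intro add_mono measure_pmf.finite_measure_subadditive_finite) auto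
  also have "\<dots> \<le> (\<Sum>a\<in>L. exp (-2 * \<tau>\<^sup>2 / r)) + (\<Sum>e\<in>pairs_L. exp (-2 * \<tau>\<^sup>2 / r))"
    using mem_pairs_L by (intro add_mono sum_mono prob_deg_R_large prob_codeg_R_small tau) auto
  also have "\<dots> = (real h + real (card pairs_L)) * exp (-2 * \<tau>\<^sup>2 / r)"
    by (simp add: algebra_simps)
  also have "\<dots> \<le> (n + real n ^ 2) * exp (-2 * \<tau>\<^sup>2 / r)"
    using h_le_n card_pairs_L_le by (intro mult_right_mono add_mono) auto
  finally show ?thesis .
qed

lemma exp_dense_le:
  assumes k: "2 \<le> k" and dense: "\<not> 16 * q * (real k - 1)\<^sup>2 \<le> 1"
    and tau: "\<tau> = real n * q / (4 * (real k - 1))"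
  shows "exp (-2 * \<tau>\<^sup>2 / r) \<le> exp (- real n / (2048 * (real k - 1) ^ 6))"
proof -
  define K where "K = real k - 1"
  have K: "0 < K" using k by (simp add: K_def)
  have "1 / (16 * K\<^sup>2) < q" using dense K by (simp add: K_def field_simps)
  hence "(1 / (16 * K\<^sup>2))\<^sup>2 \<le> q\<^sup>2" using K by (intro power_mono) auto
  hence "real n / (8 * K\<^sup>2) * (1 / (16 * K\<^sup>2))\<^sup>2 \<le> real n / (8 * K\<^sup>2) * q\<^sup>2"
    by (intro mult_left_mono) auto
  moreover have "real n / (2048 * K ^ 6) = real n / (8 * K\<^sup>2) * (1 / (16 * K\<^sup>2))\<^sup>2"
    using K by (simp add: field_simps power2_eq_square eval_nat_numeral)
  moreover have "real n / (8 * K\<^sup>2) * q\<^sup>2 = 2 * \<tau>\<^sup>2 / real n"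
    using K n_ge_2 unfolding tau K_def[symmetric] by (simp add: field_simps power2_eq_square)
  moreover have "2 * \<tau>\<^sup>2 / real n \<le> 2 * \<tau>\<^sup>2 / r"
    using r_ge_1 r_le_n by (intro divide_left_mono) auto
  ultimately show ?thesis by (simp add: K_def)
qed

lemma prob_inner_L_small:
  assumes k: "2 \<le> k"
  shows "Pr {G. \<exists>i\<in>L. \<exists>j\<in>L. i \<noteq> j \<and> inner_L G i j < - 1 / (real k - 1)}
           \<le> (n + real n ^ 2) * exp (- real n / (2048 * (real k - 1) ^ 6))"
proof (cases "16 * q * (real k - 1)\<^sup>2 \<le> 1")
  case True
  hence "{G. \<exists>i\<in>L. \<exists>j\<in>L. i \<noteq> j \<and> inner_L G i j < - 1 / (real k - 1)} = {}"
    using inner_L_ge_sparse[OF k] by (auto simp: not_less)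
  hence "Pr {G. \<exists>i\<in>L. \<exists>j\<in>L. i \<noteq> j \<and> inner_L G i j < - 1 / (real k - 1)} = 0"
    by (simp only: measure_empty)
  thus ?thesis by simp
next
  case False
  define \<tau> where "\<tau> = real n * q / (4 * (real k - 1))"
  have "Pr {G. \<exists>i\<in>L. \<exists>j\<in>L. i \<noteq> j \<and> inner_L G i j < - 1 / (real k - 1)} \<le> Pr (atypical \<tau>)"
    using inner_L_small_imp_atypical[OF k \<tau>_def]
    by (intro measure_pmf.finite_measure_mono) auto
  also have "\<dots> \<le> (n + real n ^ 2) * exp (-2 * \<tau>\<^sup>2 / r)"
    using q_pos k by (intro prob_atypical_le) (simp add: \<tau>_def)
  also have "\<dots> \<le> (n + real n ^ 2) * exp (- real n / (2048 * (real k - 1) ^ 6))"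
    by (intro mult_left_mono exp_dense_le[OF k False \<tau>_def]) simp
  finally show ?thesis .
qed

end

definition sdp_error :: "nat \<Rightarrow> nat \<Rightarrow> real" where
  "sdp_error k n = 768\<^sup>2 / real n + 96 / real n + 768\<^sup>2 / real n ^ 2 + 768 / sqrt (real n)
                   + (real n + real n ^ 2) * exp (- real n / (2048 * (real k - 1) ^ 6))"

lemma sdp_error_tendsto_0:
  assumes "2 \<le> k"
  shows "sdp_error k \<longlonglongrightarrow> 0"
proof -
  define K where "K = 2048 * (real k - 1) ^ 6"
  have "0 < K" using assms by (simp add: K_def)
  hence "(\<lambda>n. 768\<^sup>2 / real n + 96 / real n + 768\<^sup>2 / real n ^ 2 + 768 / sqrt (real n)
              + (real n + real n ^ 2) * exp (- real n / K)) \<longlonglongrightarrow> 0"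
    by real_asymp
  thus ?thesis unfolding sdp_error_def K_def .
qed

context gnp_halves
begin

definition good :: "nat \<Rightarrow> (nat \<times> nat \<Rightarrow> bool) \<Rightarrow> bool" where
  "good k G \<longleftrightarrow>
     card (pairs n) * q - slack \<le> edge_count G \<and>
     real h * (real r * q) / 4 \<le> (\<Sum>i\<in>L. deg_trunc G i) \<and>
     \<bar>fluct G\<bar> < slack \<and>
     q / 2 * (\<Sum>t\<in>R. (col_sum G t)\<^sup>2) < slack \<and>
     (\<forall>i\<in>L. \<forall>j\<in>L. i \<noteq> j \<longrightarrow> - 1 / (real k - 1) \<le> inner_L G i j)"

lemma eps_le_inverse:
  assumes k: "2 \<le> k" and nq: "real k ^ 2 \<le> real n * q"
  shows "eps \<le> 1 / (real k - 1)"
proof (rule power2_le_imp_le)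
  have "(real k - 1)\<^sup>2 \<le> real k ^ 2" using k by (intro power_mono) auto
  hence "(real k - 1)\<^sup>2 \<le> real n * q" using nq by linarith
  hence "1 / (real n * q) \<le> 1 / (real k - 1)\<^sup>2"
    using k by (intro frac_le) auto
  thus "eps\<^sup>2 \<le> (1 / (real k - 1))\<^sup>2" by (simp add: eps_sq power_divide)
qed (use k in simp)

lemma gain_ge:
  assumes Y: "real h * (real r * q) / 4 \<le> (\<Sum>i\<in>L. deg_trunc G i)"
  shows "6 * slack \<le> (1 - q) * (\<Sum>i\<in>L. phi G i * deg_R G i)"
proof -
  have "6 * slack = eps * (real n ^ 2 / 8 * q) / 16"
    using eps_mult_nq by (simp add: slack_def power2_eq_square algebra_simps)
  also have "\<dots> \<le> eps * (real h * real r * q) / 16"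
    using n_sq_le_8_h_r q_pos eps_pos by (intro divide_right_mono mult_left_mono mult_right_mono) auto
  also have "\<dots> = 1 / 2 * (eps / 2 * (real h * (real r * q) / 4))" by simp
  also have "\<dots> \<le> 1 / 2 * (eps / 2 * (\<Sum>i\<in>L. deg_trunc G i))"
    using Y eps_pos by (intro mult_left_mono) auto
  also have "\<dots> = 1 / 2 * (\<Sum>i\<in>L. eps / 2 * deg_trunc G i)" by (simp add: sum_distrib_left)
  also have "\<dots> \<le> (1 - q) * (\<Sum>i\<in>L. phi G i * deg_R G i)"
  proof (rule mult_mono)
    show "(\<Sum>i\<in>L. eps / 2 * deg_trunc G i) \<le> (\<Sum>i\<in>L. phi G i * deg_R G i)"
      by (intro sum_mono deg_trunc_gain)
    show "0 \<le> (\<Sum>i\<in>L. eps / 2 * deg_trunc G i)"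
      using eps_pos by (intro sum_nonneg mult_nonneg_nonneg deg_trunc_nonneg) auto
  qed (use q_le_half in auto)
  finally show ?thesis .
qed

lemma SDP_ge_if_good:
  assumes k: "2 \<le> k" and nq: "real k ^ 2 \<le> real n * q" and G: "good k G"
  shows "(1 - 1 / real k) * real (n choose 2) * q + real n * sqrt (real n * q) / 512 \<le> SDP n k G"
proof -
  define c where "c = (real k - 1) / real k"
  have c: "1 / 2 \<le> c" using k by (simp add: c_def field_simps)
  have feasible: "fj_feasible n k (vecs G)"
    using G eps_le_inverse[OF k nq] by (intro vecs_feasible k) (auto simp: good_def)
  have "penalty G < 2 * slack" using penalty_le[of G] G by (simp add: good_def)
  hence "card (pairs n) * q + 3 * slack \<le>
         edge_count G + (1 - q) * (\<Sum>i\<in>L. phi G i * deg_R G i) - penalty G"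
    using G gain_ge[of G] by (simp add: good_def)
  hence "c * (card (pairs n) * q + 3 * slack) \<le> fj_objective n k G (vecs G)"
    using c unfolding fj_objective_vecs c_def[symmetric] by (intro mult_left_mono) auto
  moreover have "1 / 2 * (3 * slack) \<le> c * (3 * slack)"
    using c slack_pos by (intro mult_right_mono) auto
  ultimately have "c * (card (pairs n) * q) + 3 / 2 * slack \<le> fj_objective n k G (vecs G)"
    by (simp add: distrib_left)
  also have "\<dots> \<le> SDP n k G" by (rule fj_objective_le_SDP[OF k feasible])
  finally show ?thesis
    using k by (simp add: c_def card_pairs slack_def field_simps)
qed

lemma prob_not_good_le:
  assumes k: "2 \<le> k" and nq: "2 * real k ^ 2 \<le> real n * q"
  shows "Pr {G. \<not> good k G} \<le> sdp_error k n"
proof -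
  have k4: "4 \<le> real k ^ 2" using power_mono[of 2 "real k" 2] k by simp
  have nq1: "1 \<le> real n * q" using nq k4 by linarith
  have "real n / 2 * q \<le> real r * q"
    using half_n_le_r q_pos by (intro mult_right_mono) auto
  hence rq: "2 \<le> real r * q" using nq k4 by simp
  define B1 B2 B3 B4 B5 where
    "B1 = {G. edge_count G < card (pairs n) * q - slack}" and
    "B2 = {G. (\<Sum>i\<in>L. deg_trunc G i) < real h * (real r * q) / 4}" and
    "B3 = {G. slack \<le> \<bar>fluct G\<bar>}" and
    "B4 = {G. slack \<le> q / 2 * (\<Sum>t\<in>R. (col_sum G t)\<^sup>2)}" and
    "B5 = {G. \<exists>i\<in>L. \<exists>j\<in>L. i \<noteq> j \<and> inner_L G i j < - 1 / (real k - 1)}"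
  have "{G. \<not> good k G} = B1 \<union> B2 \<union> B3 \<union> B4 \<union> B5"
    by (auto simp: good_def B1_def B2_def B3_def B4_def B5_def not_less not_le)
  hence "Pr {G. \<not> good k G} \<le> Pr B1 + Pr B2 + Pr B3 + Pr B4 + Pr B5"
    using Pr_union_le[of "B1 \<union> B2 \<union> B3 \<union> B4" B5] Pr_union_le[of "B1 \<union> B2 \<union> B3" B4]
      Pr_union_le[of "B1 \<union> B2" B3] Pr_union_le[of B1 B2] by simp
  also have "\<dots> \<le> sdp_error k n"
    unfolding sdp_error_def B1_def B2_def B3_def B4_def B5_def
    using prob_edge_count_small prob_sum_deg_trunc_small[OF rq] prob_fluct_large
      prob_col_sum_large[OF nq1] prob_inner_L_small[OF k]
    by (intro add_mono) assumption+
  finally show ?thesis .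
qed

lemma prob_SDP_ge:
  assumes k: "2 \<le> k" and nq: "2 * real k ^ 2 \<le> real n * q"
  shows "1 - sdp_error k n \<le>
         Pr {G. (1 - 1 / real k) * real (n choose 2) * q + real n * sqrt (real n * q) / 512 \<le> SDP n k G}"
proof -
  have "real k ^ 2 \<le> real n * q" using nq zero_le_power2[of "real k"] by linarith
  hence "{G. good k G} \<subseteq>
         {G. (1 - 1 / real k) * real (n choose 2) * q + real n * sqrt (real n * q) / 512 \<le> SDP n k G}"
    using SDP_ge_if_good[OF k] by auto
  hence "Pr (UNIV - {G. \<not> good k G}) \<le>
         Pr {G. (1 - 1 / real k) * real (n choose 2) * q + real n * sqrt (real n * q) / 512 \<le> SDP n k G}"
    by (intro measure_pmf.finite_measure_mono) auto
  thus ?thesis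
    using measure_pmf.prob_compl[of "{G. \<not> good k G}" M] prob_not_good_le[OF k nq] by simp
qed

end

lemma prob_SDP_ge_gnp:
  assumes k: "2 \<le> k" and n: "2 \<le> n" and p: "2 * real k ^ 2 \<le> real n * p" "p \<le> 1 / 2"
  shows "1 - sdp_error k n \<le> measure_pmf.prob (gnp n p)
           {G. SDP n k G \<ge> (1 - 1 / real k) * real (n choose 2) * p
                             + 1 / 512 * real n powr (3/2) * p powr (1/2)}"
proof -
  have "0 < real k ^ 2" using k by simp
  hence "0 < real n * p" using p(1) by linarith
  hence p_pos: "0 < p" using n by (simp add: zero_less_mult_iff)
  interpret gnp_halves n p using p_pos p(2) n by unfold_locales
  have "real n powr (3/2) = real n powr (1 + 1/2)" by simp
  also have "\<dots> = real n powr 1 * real n powr (1/2)" using n by (subst powr_add) auto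
  finally have "real n powr (3/2) = real n * sqrt (real n)"
    using n by (simp add: powr_half_sqrt)
  hence "1 / 512 * real n powr (3/2) * p powr (1/2) = real n * sqrt (real n * p) / 512"
    using p_pos by (simp add: powr_half_sqrt real_sqrt_mult)
  thus ?thesis
    using prob_SDP_ge[OF k p(1)] unfolding gnp_def by simp
qed

lemma prob_SDP_ge_tendsto_1:
  assumes c0: "2 \<le> c0" and k: "2 \<le> k"
    and p: "\<forall>\<^sub>F n in sequentially. c0 * real k ^ 2 / real n \<le> p n \<and> p n \<le> 1 / 2"
  shows "(\<lambda>n. measure_pmf.prob (gnp n (p n))
           {G. SDP n k G \<ge> (1 - 1 / real k) * real (n choose 2) * p n
                             + 1 / 512 * real n powr (3/2) * p n powr (1/2)}) \<longlonglongrightarrow> 1"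
proof (rule tendsto_sandwich[OF _ _ _ tendsto_const])
  show "\<forall>\<^sub>F n in sequentially. 1 - sdp_error k n \<le> measure_pmf.prob (gnp n (p n))
          {G. SDP n k G \<ge> (1 - 1 / real k) * real (n choose 2) * p n
                            + 1 / 512 * real n powr (3/2) * p n powr (1/2)}"
    using p eventually_ge_at_top[of 2]
  proof eventually_elim
    case (elim n)
    have "2 * real k ^ 2 \<le> c0 * real k ^ 2" using c0 by (intro mult_right_mono) auto
    also have "\<dots> \<le> real n * p n" using elim by (simp add: divide_le_eq mult.commute)
    finally show ?case using elim k by (intro prob_SDP_ge_gnp) auto
  qed
  show "(\<lambda>n. 1 - sdp_error k n) \<longlonglongrightarrow> 1"
    using tendsto_diff[OF tendsto_const sdp_error_tendsto_0[OF k], of 1] by simp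
qed simp

theorem corollary1:
  shows "\<exists>C>0. \<forall>c0\<ge>C. \<exists>c1>0. \<forall>k::nat. \<forall>p::nat \<Rightarrow> real.
     k \<ge> 2 \<longrightarrow>
     (\<forall>\<^sub>F n in sequentially. c0 * real k ^ 2 / real n \<le> p n \<and> p n \<le> 1 / 2) \<longrightarrow>
     (\<lambda>n. measure_pmf.prob (gnp n (p n))
        {G. SDP n k G \<ge> (1 - 1 / real k) * real (n choose 2) * p n
                          + c1 * real n powr (3/2) * p n powr (1/2)})
       \<longlonglongrightarrow> 1"
  by (rule exI[of _ 2]) (auto intro!: exI[of _ "1 / 512"] prob_SDP_ge_tendsto_1)

end
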